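(* Let $d\ge m\ge 1$ be integers. Let $a^+_{m}(n;d)$ (resp. $a^-_{m}(n;d)$) denote the number of partitions of $n$ whose Frobenius symbol has exactly $d$ columns and exactly $m$ parity blocks, the last parity block being positive (resp. negative). Then, as formal power series in $q$, \[ \sum_{n=1}^{\infty} a^+_{m}(n;d) q^n = \frac{q^{d^2+d+\binom{m}{2}}}{(q;q)_{2d}}\, \frac{1-q^m}{1-q^d} \begin{bmatrix}2d\\ d+m\end{bmatrix}_q \] and \[ \sum_{n=1}^{\infty} a^-_{m}(n;d) q^n = \frac{q^{d^2+\binom{m}{2}}}{(q;q)_{2d}}\, \frac{1-q^m}{1-q^d} \begin{bmatrix}2d\\ d+m\end{bmatrix}_q . \]
   Context: Every partition $\lambda$ of $n$ is represented by its Frobenius symbol $\begin{pmatrix} x_1 & \cdots & x_d\\ y_1&\cdots & y_d\end{pmatrix}$, where $d$ is the number of cells on the main diagonal of the Ferrers diagram, $x_i$ (resp. $y_i$) is the number of cells in row $i$ to the right of (resp. in column $i$ below) the diagonal, so $x_1>\cdots>x_d\ge 0$, $y_1>\cdots>y_d\ge0$ and $\sum_{i=1}^d(x_i+y_i+1)=n$; $d$ is called the number of columns. Column $i$ is positive if $x_i-y_i\ge 1$ and negative if $x_i-y_i\le 0$. The parity blocks of $\lambda$ are the maximal sets of contiguous columns all having the same sign; a block is positive (resp. negative) if its columns are positive (resp. negative). Notation: $(a;q)_n=(1-a)(1-aq)\cdots(1-aq^{n-1})$, and $\begin{bmatrix}n\\k\end{bmatrix}_q=\frac{(q;q)_n}{(q;q)_k(q;q)_{n-k}}$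 for $n\ge k\ge0$ and $0$ otherwise. *)

theory Defs
  imports "HOL-Computational_Algebra.Formal_Power_Series"
begin

definition partitions :: "nat \<Rightarrow> nat list set" where
  "partitions n = {l. sorted_wrt (\<ge>) l \<and> (\<forall>x\<in>set l. 0 < x) \<and> sum_list l = n}"

text \<open>Number of columns d of the Frobenius symbol = number of diagonal cells
  (0-indexed: cell (i,i) exists iff row i has more than i cells).\<close>
definition frob_d :: "nat list \<Rightarrow> nat" where
  "frob_d l = card {i. i < length l \<and> i < l ! i}"

definition conj_part :: "nat list \<Rightarrow> nat \<Rightarrow> nat" where
  "conj_part l i = card {j. j < length l \<and> i < l ! j}"

text \<open>x_i: cells in row i right of the diagonal; y_i: cells in column i below it
  (columns indexed 0..d-1 here, i.e. index i here is column i+1 of the paper).\<close>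
definition frob_x :: "nat list \<Rightarrow> nat \<Rightarrow> nat" where
  "frob_x l i = l ! i - i - 1"

definition frob_y :: "nat list \<Rightarrow> nat \<Rightarrow> nat" where
  "frob_y l i = conj_part l i - i - 1"

definition col_positive :: "nat list \<Rightarrow> nat \<Rightarrow> bool" where
  "col_positive l i \<longleftrightarrow> int (frob_x l i) - int (frob_y l i) \<ge> 1"

definition col_signs :: "nat list \<Rightarrow> bool list" where
  "col_signs l = map (col_positive l) [0..<frob_d l]"

definition num_blocks :: "nat list \<Rightarrow> nat" where
  "num_blocks l = length (remdups_adj (col_signs l))"

definition last_block_positive :: "nat list \<Rightarrow> bool" where
  "last_block_positive l \<longleftrightarrow> last (col_signs l)"

definition a_plus :: "nat \<Rightarrow> nat \<Rightarrow> nat \<Rightarrow> nat" where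
  "a_plus m n d = card {l \<in> partitions n. frob_d l = d \<and> num_blocks l = m \<and> last_block_positive l}"

definition a_minus :: "nat \<Rightarrow> nat \<Rightarrow> nat \<Rightarrow> nat" where
  "a_minus m n d = card {l \<in> partitions n. frob_d l = d \<and> num_blocks l = m \<and> \<not> last_block_positive l}"

definition qpoch :: "'a::comm_ring_1 fps \<Rightarrow> nat \<Rightarrow> 'a fps" where
  "qpoch a n = (\<Prod>k<n. 1 - a * fps_X ^ k)"

definition qbinom :: "nat \<Rightarrow> nat \<Rightarrow> 'a::field fps" where
  "qbinom n k = (if k \<le> n then qpoch fps_X n / (qpoch fps_X k * qpoch fps_X (n - k)) else 0)"

end

theory Submission
  imports Defs
begin

text \<open>
  Through its Frobenius symbol, a partition of \<open>n\<close> with \<open>d\<close> columns is a pair of strictly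
  increasing lists \<open>xs = [x\<^sub>d, \<dots>, x\<^sub>1]\<close>, \<open>ys = [y\<^sub>d, \<dots>, y\<^sub>1]\<close> with
  \<open>sum xs + sum ys + d = n\<close>.  Merging the two lists increasingly (an \<open>x\<close> before an equal \<open>y\<close>)
  yields a word with \<open>d\<close> letters \<open>x\<close> and \<open>d\<close> letters \<open>y\<close>, and column \<open>i\<close> is positive
  iff the letter preceding the \<open>i\<close>-th balanced suffix of the word is an \<open>x\<close>.  So the parity
  blocks depend only on the word, while the pairs with a fixed word \<open>w\<close> of length \<open>N\<close> have
  generating function \<open>q\<^bsup>min_weight w\<^esup> / (q;q)\<^sub>N\<close>.

  It remains to sum \<open>q\<^bsup>min_weight w\<^esup>\<close> over the balanced words with \<open>m\<close> blocks and a given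
  last sign.  Refined by the number of each letter, the first letter and a lower bound \<open>R\<close> on
  the number of blocks, these sums obey a recursion obtained by removing the first letter; it
  is solved by explicit products of a power of \<open>q\<close> and a Gaussian binomial coefficient.  The
  difference of the cases \<open>R = m\<close> and \<open>R = m + 1\<close> is turned into the stated formula by a
  \<open>q\<close>-binomial identity.
\<close>

section \<open>The Frobenius correspondence\<close>

lemma less_card_down_closed_iff:
  fixes S :: "nat set"
  assumes fin: "finite S" and down: "\<And>i j. i \<in> S \<Longrightarrow> j < i \<Longrightarrow> j \<in> S"
  shows "i < card S \<longleftrightarrow> i \<in> S"
proof
  assume i: "i < card S"
  show "i \<in> S"
  proof (rule ccontr)
    assume "i \<notin> S"
    have "S \<subseteq> {..<i}"
    proof
      fix k assume "k \<in> S"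
      then show "k \<in> {..<i}" using \<open>i \<notin> S\<close> down[of k i] by (cases k i rule: linorder_cases) auto
    qed
    then have "card S \<le> card {..<i}" by (rule card_mono[rotated]) simp
    then show False using i by simp
  qed
next
  assume "i \<in> S"
  then have "{..i} \<subseteq> S" using down by (auto simp: le_less)
  then have "card {..i} \<le> card S" by (rule card_mono[OF fin])
  then show "i < card S" by simp
qed

lemma sorted_less_nth_gap:
  "sorted_wrt (<) xs \<Longrightarrow> i \<le> j \<Longrightarrow> j < length xs \<Longrightarrow> xs ! i + (j - i) \<le> (xs ! j :: nat)"
proof (induction j)
  case (Suc j)
  show ?case
  proof (cases "i = Suc j")
    case False
    then have "xs ! i + (j - i) \<le> xs ! j" using Suc by simp
    moreover have "xs ! j < xs ! Suc j" using Suc.prems sorted_wrt_nth_less by blast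
    ultimately show ?thesis using False Suc.prems by linarith
  qed simp
qed simp

context
  fixes l :: "nat list"
  assumes sorted: "sorted_wrt (\<ge>) l" and pos: "\<forall>x\<in>set l. 0 < x"
begin

lemma nth_antimono: "i \<le> j \<Longrightarrow> j < length l \<Longrightarrow> l ! j \<le> l ! i"
  using sorted_wrt_nth_less[OF sorted, of i j] by (cases "i = j") auto

lemma less_frob_d_iff: "i < frob_d l \<longleftrightarrow> i < length l \<and> i < l ! i"
proof -
  have "i < card {i. i < length l \<and> i < l ! i} \<longleftrightarrow> i \<in> {i. i < length l \<and> i < l ! i}"
  proof (rule less_card_down_closed_iff)
    fix i j assume "i \<in> {i. i < length l \<and> i < l ! i}" "j < i"
    then show "j \<in> {i. i < length l \<and> i < l ! i}" using nth_antimono[of j i] by auto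
  qed simp
  then show ?thesis by (simp add: frob_d_def)
qed

lemma less_conj_part_iff: "i < conj_part l j \<longleftrightarrow> i < length l \<and> j < l ! i"
proof -
  have "i < card {i. i < length l \<and> j < l ! i} \<longleftrightarrow> i \<in> {i. i < length l \<and> j < l ! i}"
  proof (rule less_card_down_closed_iff)
    fix i i' assume "i \<in> {i. i < length l \<and> j < l ! i}" "i' < i"
    then show "i' \<in> {i. i < length l \<and> j < l ! i}" using nth_antimono[of i' i] by auto
  qed simp
  then show ?thesis by (simp add: conj_part_def)
qed

lemma conj_part_0: "conj_part l 0 = length l"
proof -
  have "{i. i < length l \<and> 0 < l ! i} = {..<length l}" using pos nth_mem by auto
  then show ?thesis by (simp add: conj_part_def)
qed

lemma frob_d_le_length: "frob_d l \<le> length l"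
  using less_frob_d_iff[of "frob_d l - 1"] by (cases "frob_d l") auto

lemma frob_d_le_nth: "i < frob_d l \<Longrightarrow> frob_d l \<le> l ! i"
proof -
  assume i: "i < frob_d l"
  then have "frob_d l - 1 < length l" "frob_d l - 1 < l ! (frob_d l - 1)"
    using less_frob_d_iff[of "frob_d l - 1"] by auto
  then show ?thesis using nth_antimono[of i "frob_d l - 1"] i by linarith
qed

lemma nth_le_frob_d: "frob_d l \<le> i \<Longrightarrow> i < length l \<Longrightarrow> l ! i \<le> frob_d l"
  using less_frob_d_iff[of "frob_d l"] nth_antimono[of "frob_d l" i] by simp

lemma nth_eq_frob_x: "i < frob_d l \<Longrightarrow> l ! i = frob_x l i + Suc i"
  using less_frob_d_iff[of i] by (simp add: frob_x_def)

lemma conj_part_eq_frob_y: "i < frob_d l \<Longrightarrow> conj_part l i = frob_y l i + Suc i"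
  using less_frob_d_iff[of i] less_conj_part_iff[of i i] by (simp add: frob_y_def)

lemma frob_x_decreasing: "i < j \<Longrightarrow> j < frob_d l \<Longrightarrow> frob_x l j < frob_x l i"
  using nth_eq_frob_x[of i] nth_eq_frob_x[of j] nth_antimono[of i j] less_frob_d_iff[of j]
  by simp

lemma frob_y_decreasing: "i < j \<Longrightarrow> j < frob_d l \<Longrightarrow> frob_y l j < frob_y l i"
proof -
  assume ij: "i < j" "j < frob_d l"
  have "{k. k < length l \<and> j < l ! k} \<subseteq> {k. k < length l \<and> i < l ! k}" using ij by auto
  then have "conj_part l j \<le> conj_part l i" unfolding conj_part_def by (intro card_mono) auto
  then show ?thesis using conj_part_eq_frob_y[of i] conj_part_eq_frob_y[of j] ij by simp
qed

lemma sum_conj_part: "(\<Sum>j<k. conj_part l j) = (\<Sum>i<length l. min k (l ! i))"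
proof (induction k)
  case (Suc k)
  have "conj_part l k = (\<Sum>i<length l. if k < l ! i then 1 else 0)"
    unfolding conj_part_def by (simp add: sum.If_cases Int_def conj_commute)
  moreover have "(\<Sum>i<length l. min (Suc k) (l ! i))
      = (\<Sum>i<length l. min k (l ! i)) + (\<Sum>i<length l. if k < l ! i then 1 else 0)"
    by (simp add: sum.distrib[symmetric]) (rule sum.cong, auto)
  ultimately show ?case using Suc by simp
qed simp

lemma frobenius_weight:
  "(\<Sum>i<frob_d l. frob_x l i) + (\<Sum>i<frob_d l. frob_y l i) + frob_d l = sum_list l"
proof -
  let ?d = "frob_d l"
  let ?A = "\<Sum>i<?d. l ! i" and ?Z = "\<Sum>i\<in>{?d..<length l}. l ! i" and ?T = "\<Sum>i<?d. Suc i"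
  have split: "(\<Sum>i<length l. f i) = (\<Sum>i<?d. f i) + (\<Sum>i\<in>{?d..<length l}. f i)" for f :: "nat \<Rightarrow> nat"
    using frob_d_le_length by (simp add: lessThan_atLeast0 sum.atLeastLessThan_concat)
  have "sum_list l = ?A + ?Z"
    by (simp add: sum_list_sum_nth atLeast0LessThan split)
  moreover have "(\<Sum>j<?d. conj_part l j) = ?d * ?d + ?Z"
    unfolding sum_conj_part split using frob_d_le_nth nth_le_frob_d by simp
  moreover have "?A = (\<Sum>i<?d. frob_x l i) + ?T"
    by (simp add: nth_eq_frob_x flip: sum.distrib)
  moreover have "(\<Sum>j<?d. conj_part l j) = (\<Sum>i<?d. frob_y l i) + ?T"
    by (simp add: conj_part_eq_frob_y flip: sum.distrib)
  moreover have "2 * ?T = ?d * Suc ?d"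
  proof -
    have "2 * (\<Sum>i<k. Suc i) = k * Suc k" for k by (induction k) auto
    then show ?thesis .
  qed
  ultimately show ?thesis by (simp add: algebra_simps)
qed

end

lemma sorted_rev_nth_gap:
  assumes "sorted_wrt (<) xs" and "i \<le> j" and "j < length xs"
  shows "rev xs ! j + (j - i) \<le> (rev xs ! i :: nat)"
  using sorted_less_nth_gap[OF assms(1), of "length xs - Suc j" "length xs - Suc i"] assms(2,3)
  by (simp add: rev_nth)

lemma sorted_rev_nth_lower:
  assumes "sorted_wrt (<) zs" and "i < length zs"
  shows "length zs - 1 \<le> rev zs ! i + (i :: nat)"
proof -
  have "rev zs ! (length zs - 1) + (length zs - 1 - i) \<le> rev zs ! i"
    using sorted_rev_nth_gap[OF assms(1), of i "length zs - 1"] assms(2) by simp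
  then show ?thesis by linarith
qed

lemma sorted_rev_map_upt:
  assumes "\<And>i j. i < j \<Longrightarrow> j < d \<Longrightarrow> f j < (f i :: nat)"
  shows "sorted_wrt (<) (rev (map f [0..<d]))"
  unfolding sorted_wrt_iff_nth_less
proof (intro allI impI)
  fix i j assume "i < j" "j < length (rev (map f [0..<d]))"
  then show "rev (map f [0..<d]) ! i < rev (map f [0..<d]) ! j"
    using assms[of "d - Suc j" "d - Suc i"] by (simp add: rev_nth)
qed

lemma sum_list_map_upt: "sum_list (map f [0..<d]) = (\<Sum>i<d. (f i :: nat))"
  by (simp add: interv_sum_list_conv_sum_set_nat atLeast0LessThan)

definition frobenius :: "nat \<Rightarrow> nat list \<Rightarrow> nat list \<times> nat list" where
  "frobenius d l = (rev (map (frob_x l) [0..<d]), rev (map (frob_y l) [0..<d]))"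

definition diag_partitions :: "nat \<Rightarrow> nat \<Rightarrow> nat list set" where
  "diag_partitions n d = {l \<in> partitions n. frob_d l = d}"

definition frobenius_pairs :: "nat \<Rightarrow> nat \<Rightarrow> (nat list \<times> nat list) set" where
  "frobenius_pairs n d = {p. sorted_wrt (<) (fst p) \<and> sorted_wrt (<) (snd p) \<and>
     length (fst p) = d \<and> length (snd p) = d \<and> sum_list (fst p) + sum_list (snd p) + d = n}"

text \<open>Row \<open>i < d\<close> has \<open>x\<^sub>i + i + 1\<close> cells and column \<open>j < d\<close> has \<open>y\<^sub>j + j + 1\<close> cells;
  row \<open>i \<ge> d\<close> consists of the columns \<open>j < d\<close> that reach it.\<close>
definition frobenius_inv :: "nat \<Rightarrow> nat list \<times> nat list \<Rightarrow> nat list" where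
  "frobenius_inv d = (\<lambda>(xs, ys). map (\<lambda>i. if i < d then rev xs ! i + i + 1
     else card {j. j < d \<and> i \<le> rev ys ! j + j}) [0..<Suc (rev ys ! 0)])"

lemma frobenius_in_pairs:
  assumes "l \<in> diag_partitions n d"
  shows "frobenius d l \<in> frobenius_pairs n d"
proof -
  have l: "sorted_wrt (\<ge>) l" "\<forall>x\<in>set l. 0 < x" "sum_list l = n" "frob_d l = d"
    using assms by (auto simp: diag_partitions_def partitions_def)
  have "sorted_wrt (<) (rev (map (frob_x l) [0..<d]))"
    by (rule sorted_rev_map_upt) (use frob_x_decreasing[OF l(1,2)] l(4) in auto)
  moreover have "sorted_wrt (<) (rev (map (frob_y l) [0..<d]))"
    by (rule sorted_rev_map_upt) (use frob_y_decreasing[OF l(1,2)] l(4) in auto)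
  ultimately show ?thesis
    using frobenius_weight[OF l(1,2)] l(3,4)
    by (simp add: frobenius_def frobenius_pairs_def sum_list_map_upt)
qed

lemma frobenius_inv_frobenius:
  assumes "l \<in> diag_partitions n d" and "1 \<le> d"
  shows "frobenius_inv d (frobenius d l) = l"
proof -
  have l: "sorted_wrt (\<ge>) l" "\<forall>x\<in>set l. 0 < x" "frob_d l = d"
    using assms(1) by (auto simp: diag_partitions_def partitions_def)
  have cols: "{j. j < d \<and> i \<le> map (frob_y l) [0..<d] ! j + j} = {j. j < d \<and> i \<le> frob_y l j + j}"
    for i by auto
  have len: "Suc (frob_y l 0) = length l"
    using conj_part_eq_frob_y[OF l(1,2), of 0] conj_part_0[OF l(1,2)] l(3) assms(2) by simp
  have row: "card {j. j < d \<and> i \<le> frob_y l j + j} = l ! i" if "d \<le> i" "i < length l" for i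
  proof -
    have "{j. j < d \<and> i \<le> frob_y l j + j} = {j. j < d \<and> i < conj_part l j}"
      using conj_part_eq_frob_y[OF l(1,2)] l(3) by auto
    also have "\<dots> = {..<l ! i}"
      using less_conj_part_iff[OF l(1,2)] nth_le_frob_d[OF l(1,2)] l(3) that by fastforce
    finally show ?thesis by simp
  qed
  show ?thesis
  proof (rule nth_equalityI)
    show "length (frobenius_inv d (frobenius d l)) = length l"
      using assms(2) len by (simp add: frobenius_inv_def frobenius_def)
  next
    fix i assume "i < length (frobenius_inv d (frobenius d l))"
    then have i: "i < length l" using assms(2) len by (simp add: frobenius_inv_def frobenius_def)
    then show "frobenius_inv d (frobenius d l) ! i = l ! i"
      using nth_eq_frob_x[OF l(1,2), of i] row[of i] len cols assms(2) l(3)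
      by (simp add: frobenius_inv_def frobenius_def nth_append del: upt_Suc)
  qed
qed

context
  fixes xs ys :: "nat list" and d :: nat
  assumes sx: "sorted_wrt (<) xs" and sy: "sorted_wrt (<) ys"
    and lx: "length xs = d" and ly: "length ys = d" and d1: "1 \<le> d"
begin

lemma rev_xs_lower: "i < d \<Longrightarrow> d - 1 \<le> rev xs ! i + i"
  using sorted_rev_nth_lower[OF sx, of i] lx by simp

lemma rev_ys_lower: "i < d \<Longrightarrow> d - 1 \<le> rev ys ! i + i"
  using sorted_rev_nth_lower[OF sy, of i] ly by simp

lemma rev_ys_diag_antimono: "j \<le> j' \<Longrightarrow> j' < d \<Longrightarrow> rev ys ! j' + j' \<le> rev ys ! j + j"
  using sorted_rev_nth_gap[OF sy, of j j'] ly by simp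

lemma less_card_columns_iff:
  "j < card {k. k < d \<and> i \<le> rev ys ! k + k} \<longleftrightarrow> j < d \<and> i \<le> rev ys ! j + j"
proof -
  have "j < card {k. k < d \<and> i \<le> rev ys ! k + k} \<longleftrightarrow> j \<in> {k. k < d \<and> i \<le> rev ys ! k + k}"
  proof (rule less_card_down_closed_iff)
    fix a b assume "a \<in> {k. k < d \<and> i \<le> rev ys ! k + k}" "b < a"
    then show "b \<in> {k. k < d \<and> i \<le> rev ys ! k + k}" using rev_ys_diag_antimono[of b a] by auto
  qed simp
  then show ?thesis by simp
qed

lemma card_columns_le: "card {k. k < d \<and> i \<le> rev ys ! k + k} \<le> d"
  using card_mono[of "{..<d}" "{k. k < d \<and> i \<le> rev ys ! k + k}"] by fastforce

lemma length_frobenius_inv: "length (frobenius_inv d (xs, ys)) = Suc (rev ys ! 0)"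
  by (simp add: frobenius_inv_def)

lemma le_length_frobenius_inv: "d \<le> length (frobenius_inv d (xs, ys))"
  using rev_ys_lower[of 0] d1 length_frobenius_inv by simp

lemma nth_frobenius_inv:
  "i < length (frobenius_inv d (xs, ys)) \<Longrightarrow> frobenius_inv d (xs, ys) ! i =
    (if i < d then rev xs ! i + i + 1 else card {j. j < d \<and> i \<le> rev ys ! j + j})"
  by (simp add: frobenius_inv_def del: upt_Suc)

lemma sorted_frobenius_inv: "sorted_wrt (\<ge>) (frobenius_inv d (xs, ys))"
  unfolding sorted_wrt_iff_nth_less
proof (intro allI impI)
  fix i j assume ij: "i < j" "j < length (frobenius_inv d (xs, ys))"
  have cols: "{k. k < d \<and> j \<le> rev ys ! k + k} \<subseteq> {k. k < d \<and> i \<le> rev ys ! k + k}"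
    using ij by auto
  show "frobenius_inv d (xs, ys) ! j \<le> frobenius_inv d (xs, ys) ! i"
    using nth_frobenius_inv[of i] nth_frobenius_inv[of j] ij sorted_rev_nth_gap[OF sx, of i j] lx
      rev_xs_lower[of i] card_columns_le[of j] card_mono[OF _ cols]
    by (cases "j < d"; cases "i < d") auto
qed

lemma frobenius_inv_pos: "\<forall>v\<in>set (frobenius_inv d (xs, ys)). 0 < v"
proof
  fix v assume "v \<in> set (frobenius_inv d (xs, ys))"
  then obtain i where i: "i < length (frobenius_inv d (xs, ys))"
    and v: "v = frobenius_inv d (xs, ys) ! i"
    by (auto simp: in_set_conv_nth)
  show "0 < v"
  proof (cases "i < d")
    case False
    then have "0 < card {k. k < d \<and> i \<le> rev ys ! k + k}"
      using less_card_columns_iff[of 0 i] d1 i length_frobenius_inv by simp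
    then show ?thesis using nth_frobenius_inv[OF i] v False by simp
  qed (use nth_frobenius_inv[OF i] v in simp)
qed

lemma frob_d_frobenius_inv: "frob_d (frobenius_inv d (xs, ys)) = d"
proof -
  have "i < length (frobenius_inv d (xs, ys)) \<and> i < frobenius_inv d (xs, ys) ! i \<longleftrightarrow> i < d" for i
  proof (cases "i < d")
    case True
    then show ?thesis using nth_frobenius_inv[of i] le_length_frobenius_inv by simp
  next
    case False
    then show ?thesis using nth_frobenius_inv[of i] card_columns_le[of i] by auto
  qed
  then have "{i. i < length (frobenius_inv d (xs, ys)) \<and> i < frobenius_inv d (xs, ys) ! i}
      = {..<d}" by auto
  then show ?thesis by (simp add: frob_d_def)
qed

lemma frob_x_frobenius_inv: "i < d \<Longrightarrow> frob_x (frobenius_inv d (xs, ys)) i = rev xs ! i"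
  using nth_frobenius_inv[of i] le_length_frobenius_inv by (simp add: frob_x_def)

lemma conj_part_frobenius_inv: "j < d \<Longrightarrow> conj_part (frobenius_inv d (xs, ys)) j = rev ys ! j + j + 1"
proof -
  assume j: "j < d"
  have "i < length (frobenius_inv d (xs, ys)) \<and> j < frobenius_inv d (xs, ys) ! i
      \<longleftrightarrow> i \<le> rev ys ! j + j" for i
  proof (cases "i < d")
    case True
    have i: "i < length (frobenius_inv d (xs, ys))" using True le_length_frobenius_inv by simp
    then have "frobenius_inv d (xs, ys) ! i = rev xs ! i + i + 1"
      using nth_frobenius_inv True by simp
    then have "j < frobenius_inv d (xs, ys) ! i" using rev_xs_lower[OF True] j by linarith
    moreover have "i \<le> rev ys ! j + j" using rev_ys_lower[OF j] True by linarith
    ultimately show ?thesis using i by simp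
  next
    case False
    have "i \<le> rev ys ! j + j \<Longrightarrow> i < length (frobenius_inv d (xs, ys))"
      using rev_ys_diag_antimono[of 0 j] j length_frobenius_inv by simp
    moreover have "j < frobenius_inv d (xs, ys) ! i
        \<longleftrightarrow> i \<le> rev ys ! j + j" if "i < length (frobenius_inv d (xs, ys))"
      using nth_frobenius_inv[OF that] less_card_columns_iff[of j i] False j by simp
    ultimately show ?thesis by blast
  qed
  then have "{i. i < length (frobenius_inv d (xs, ys)) \<and> j < frobenius_inv d (xs, ys) ! i}
      = {..< rev ys ! j + j + 1}"
    by (simp add: set_eq_iff less_Suc_eq_le)
  then show ?thesis by (simp add: conj_part_def)
qed

lemma frob_y_frobenius_inv: "j < d \<Longrightarrow> frob_y (frobenius_inv d (xs, ys)) j = rev ys ! j"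
  using conj_part_frobenius_inv by (simp add: frob_y_def)

lemma frobenius_frobenius_inv: "frobenius d (frobenius_inv d (xs, ys)) = (xs, ys)"
proof -
  have "map (frob_x (frobenius_inv d (xs, ys))) [0..<d] = rev xs"
    by (rule nth_equalityI) (simp_all add: lx frob_x_frobenius_inv)
  moreover have "map (frob_y (frobenius_inv d (xs, ys))) [0..<d] = rev ys"
    by (rule nth_equalityI) (simp_all add: ly frob_y_frobenius_inv)
  ultimately show ?thesis by (simp add: frobenius_def)
qed

lemma sum_list_frobenius_inv: "sum_list (frobenius_inv d (xs, ys)) = sum_list xs + sum_list ys + d"
proof -
  have "sum_list xs = (\<Sum>i<d. frob_x (frobenius_inv d (xs, ys)) i)"
    and "sum_list ys = (\<Sum>i<d. frob_y (frobenius_inv d (xs, ys)) i)"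
    using arg_cong[OF frobenius_frobenius_inv, of "\<lambda>p. sum_list (fst p)"]
      arg_cong[OF frobenius_frobenius_inv, of "\<lambda>p. sum_list (snd p)"]
    by (simp_all add: frobenius_def sum_list_map_upt)
  then show ?thesis
    using frobenius_weight[OF sorted_frobenius_inv frobenius_inv_pos] frob_d_frobenius_inv by simp
qed

end

lemma bij_betw_frobenius:
  assumes "1 \<le> d"
  shows "bij_betw (frobenius d) (diag_partitions n d) (frobenius_pairs n d)"
proof (rule bij_betw_byWitness[where f' = "frobenius_inv d"])
  show "\<forall>l\<in>diag_partitions n d. frobenius_inv d (frobenius d l) = l"
    using frobenius_inv_frobenius assms by blast
  show "frobenius d ` diag_partitions n d \<subseteq> frobenius_pairs n d"
    using frobenius_in_pairs by blast
  have pair: "sorted_wrt (<) xs" "sorted_wrt (<) ys" "length xs = d" "length ys = d"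
    "sum_list xs + sum_list ys + d = n" if "(xs, ys) \<in> frobenius_pairs n d" for xs ys
    using that by (auto simp: frobenius_pairs_def)
  show "\<forall>p\<in>frobenius_pairs n d. frobenius d (frobenius_inv d p) = p"
    using frobenius_frobenius_inv[OF pair(1-4) assms] by auto
  show "frobenius_inv d ` frobenius_pairs n d \<subseteq> diag_partitions n d"
    using sorted_frobenius_inv[OF pair(1-4) assms] frobenius_inv_pos[OF pair(1-4) assms]
      frob_d_frobenius_inv[OF pair(1-4) assms] sum_list_frobenius_inv[OF pair(1-4) assms] pair(5)
    by (auto simp: diag_partitions_def partitions_def)
qed

section \<open>Gaussian binomial coefficients\<close>

fun qbin :: "nat \<Rightarrow> nat \<Rightarrow> 'a::field fps" where
  "qbin n 0 = 1"
| "qbin 0 (Suc k) = 0"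
| "qbin (Suc n) (Suc k) = qbin n k + fps_X ^ Suc k * qbin n (Suc k)"

lemma qbin_eq_0: "n < k \<Longrightarrow> qbin n k = 0"
proof (induction n arbitrary: k)
  case 0 then show ?case by (cases k) auto
next
  case (Suc n) then show ?case by (cases k) auto
qed

lemma qbin_diag [simp]: "qbin n n = 1"
  by (induction n) (simp_all add: qbin_eq_0)

lemma qpoch_X_0 [simp]: "qpoch fps_X 0 = 1"
  by (simp add: qpoch_def)

lemma qpoch_X_Suc: "qpoch fps_X (Suc n) = qpoch fps_X n * (1 - fps_X ^ Suc n)"
  by (simp add: qpoch_def)

lemma qpoch_X_nth_0 [simp]: "fps_nth (qpoch fps_X n :: 'a::comm_ring_1 fps) 0 = 1"
  by (induction n) (simp_all add: qpoch_X_Suc)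

lemma qpoch_X_nonzero: "qpoch fps_X n \<noteq> (0 :: 'a::comm_ring_1 fps)"
  using qpoch_X_nth_0[of n, where 'a = 'a] by (metis fps_zero_nth zero_neq_one)

lemma qbin_mult_qpoch:
  "k \<le> n \<Longrightarrow> qbin n k * qpoch fps_X k * qpoch fps_X (n - k) = (qpoch fps_X n :: 'a::field fps)"
proof (induction n arbitrary: k)
  case (Suc n)
  show ?case
  proof (cases k)
    case (Suc j)
    show ?thesis
    proof (cases "j = n")
      case False
      then have "j < n" using Suc.prems \<open>k = Suc j\<close> by simp
      then obtain t where t: "n = Suc (j + t)" using less_iff_Suc_add by blast
      have e1: "qbin n j * qpoch fps_X j * qpoch fps_X (Suc t) = (qpoch fps_X n :: 'a fps)"
        using Suc.IH[of j] t by simp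
      have e2: "qbin n (Suc j) * qpoch fps_X (Suc j) * qpoch fps_X t = (qpoch fps_X n :: 'a fps)"
        using Suc.IH[of "Suc j"] t by simp
      have X: "(fps_X :: 'a fps) ^ Suc n = fps_X ^ Suc j * fps_X ^ Suc t"
        using t by (simp flip: power_add)
      have "qbin (Suc n) (Suc j) * qpoch fps_X (Suc j) * qpoch fps_X (Suc n - Suc j)
          = (qbin n j * (qpoch fps_X j :: 'a fps) * qpoch fps_X (Suc t)) * (1 - fps_X ^ Suc j)
            + fps_X ^ Suc j * (qbin n (Suc j) * qpoch fps_X (Suc j) * qpoch fps_X t)
              * (1 - fps_X ^ Suc t)"
        using t by (simp add: qpoch_X_Suc algebra_simps)
      also have "\<dots> = qpoch fps_X n * (1 - fps_X ^ Suc n)"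
        unfolding e1 e2 X by (simp add: algebra_simps)
      finally show ?thesis using Suc by (simp add: qpoch_X_Suc)
    qed (use Suc Suc.IH[of n] in \<open>simp add: qbin_eq_0 qpoch_X_Suc\<close>)
  qed simp
qed simp

lemma qbin_symmetric: "k \<le> n \<Longrightarrow> qbin n k = (qbin n (n - k) :: 'a::field fps)"
proof -
  assume k: "k \<le> n"
  let ?P = "qpoch fps_X k * qpoch fps_X (n - k) :: 'a fps"
  have "qbin n k * ?P = qpoch fps_X n"
    using qbin_mult_qpoch[where 'a='a, OF k] by (simp add: mult.assoc)
  moreover have "qbin n (n - k) * ?P = qpoch fps_X n"
    using qbin_mult_qpoch[where 'a='a, of "n - k" n] k by (simp add: mult_ac)
  moreover have "?P \<noteq> 0" using qpoch_X_nonzero[where 'a='a] by simp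
  ultimately show ?thesis by (metis mult_right_cancel)
qed

lemma qbin_pascal':
  "k \<le> n \<Longrightarrow> qbin (Suc n) (Suc k) = qbin n (Suc k) + fps_X ^ (n - k) * (qbin n k :: 'a::field fps)"
proof (cases "k = n")
  case True
  then show ?thesis by (simp add: qbin_eq_0)
next
  case False
  assume "k \<le> n"
  then have kn: "k < n" using False by simp
  then obtain t where t: "n - k = Suc t" by (metis Suc_diff_Suc)
  have "qbin (Suc n) (Suc k) = (qbin (Suc n) (Suc n - Suc k) :: 'a fps)"
    using kn by (intro qbin_symmetric) simp
  also have "Suc n - Suc k = Suc t" using t by simp
  also have "(qbin (Suc n) (Suc t) :: 'a fps) = qbin n t + fps_X ^ Suc t * qbin n (Suc t)" by simp
  also have "(qbin n t :: 'a fps) = qbin n (Suc k)"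
  proof -
    have "n - Suc k = t" using t by simp
    then show ?thesis using qbin_symmetric[where 'a='a, of "Suc k" n] kn by simp
  qed
  also have "(qbin n (Suc t) :: 'a fps) = qbin n k"
    using qbin_symmetric[where 'a='a, of k n] kn t by simp
  finally show ?thesis using t by simp
qed

lemma qbin_Suc_Suc_ratio:
  "k \<le> n \<Longrightarrow> (1 - fps_X ^ Suc k) * qbin (Suc n) (Suc k)
      = (1 - fps_X ^ Suc n) * (qbin n k :: 'a::field fps)"
proof -
  assume k: "k \<le> n"
  have "((1 - fps_X ^ Suc k) * qbin (Suc n) (Suc k)) * (qpoch fps_X k
      * (qpoch fps_X (n - k) :: 'a fps))
      = qbin (Suc n) (Suc k) * qpoch fps_X (Suc k) * qpoch fps_X (Suc n - Suc k)"
    by (simp add: qpoch_X_Suc algebra_simps)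
  also have "\<dots> = qpoch fps_X (Suc n)" using k by (intro qbin_mult_qpoch) simp
  also have "\<dots> = ((1 - fps_X ^ Suc n) * qbin n k) * (qpoch fps_X k * qpoch fps_X (n - k))"
    using qbin_mult_qpoch[where 'a='a, OF k] by (simp add: qpoch_X_Suc algebra_simps)
  finally show ?thesis
    using qpoch_X_nonzero[where 'a='a, of k] qpoch_X_nonzero[where 'a='a, of "n - k"] by simp
qed

lemma qbin_Suc_ratio:
  "k \<le> n \<Longrightarrow> (1 - fps_X ^ (Suc n - k)) * qbin (Suc n) k
      = (1 - fps_X ^ Suc n) * (qbin n k :: 'a::field fps)"
proof -
  assume k: "k \<le> n"
  have e: "Suc n - k = Suc (n - k)" using k by simp
  have "((1 - fps_X ^ (Suc n - k)) * qbin (Suc n) k) * (qpoch fps_X k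
      * (qpoch fps_X (n - k) :: 'a fps))
      = qbin (Suc n) k * qpoch fps_X k * qpoch fps_X (Suc n - k)"
    unfolding e by (simp add: qpoch_X_Suc algebra_simps)
  also have "\<dots> = qpoch fps_X (Suc n)" using k by (intro qbin_mult_qpoch) simp
  also have "\<dots> = ((1 - fps_X ^ Suc n) * qbin n k) * (qpoch fps_X k * qpoch fps_X (n - k))"
    using qbin_mult_qpoch[where 'a='a, OF k] by (simp add: qpoch_X_Suc algebra_simps)
  finally show ?thesis
    using qpoch_X_nonzero[where 'a='a, of k] qpoch_X_nonzero[where 'a='a, of "n - k"] by simp
qed

lemma qbinom_eq_qbin: "k \<le> n \<Longrightarrow> qbinom n k = (qbin n k :: 'a::field fps)"
proof -
  assume k: "k \<le> n"
  have "qpoch fps_X n = qbin n k * (qpoch fps_X k * (qpoch fps_X (n - k) :: 'a fps))"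
    using qbin_mult_qpoch[where 'a='a, OF k] by (simp add: mult.assoc)
  moreover have "qpoch fps_X k * qpoch fps_X (n - k) \<noteq> (0::'a fps)"
    using qpoch_X_nonzero[where 'a='a] by simp
  ultimately show ?thesis unfolding qbinom_def using k by (simp add: fps_divide_times_eq)
qed

lemma qbin_pascal:
  "qbin (Suc m) (Suc k) = qbin m k + fps_X ^ Suc k * (qbin m (Suc k) :: 'a::field fps)"
  by simp

declare qbin.simps(3) [simp del]

lemma qbin_middle_symmetric: "qbin (Suc (k + k)) k = (qbin (Suc (k + k)) (Suc k) :: 'a::field fps)"
  using qbin_symmetric[of k "Suc (k + k)"] by simp

section \<open>Merge words and column signs\<close>

fun count_x :: "bool list \<Rightarrow> nat" where
  "count_x [] = 0"
| "count_x (c # r) = (if c then Suc (count_x r) else count_x r)"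

fun count_y :: "bool list \<Rightarrow> nat" where
  "count_y [] = 0"
| "count_y (c # r) = (if c then count_y r else Suc (count_y r))"

lemma count_x_add_count_y: "count_x r + count_y r = length r"
  by (induction r) auto

fun merge_word :: "nat list \<Rightarrow> nat list \<Rightarrow> bool list" where
  "merge_word [] [] = []"
| "merge_word (x # xs) [] = True # merge_word xs []"
| "merge_word [] (y # ys) = False # merge_word [] ys"
| "merge_word (x # xs) (y # ys) =
    (if x \<le> y then True # merge_word xs (y # ys) else False # merge_word (x # xs) ys)"

lemma count_x_merge_word [simp]: "count_x (merge_word xs ys) = length xs"
  by (induction xs ys rule: merge_word.induct) auto

lemma count_y_merge_word [simp]: "count_y (merge_word xs ys) = length ys"
  by (induction xs ys rule: merge_word.induct) auto

lemma length_merge_word [simp]: "length (merge_word xs ys) = length xs + length ys"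
  by (induction xs ys rule: merge_word.induct) auto

lemma merge_word_eq_Nil: "merge_word xs ys = [] \<Longrightarrow> xs = [] \<and> ys = []"
  by (induction xs ys rule: merge_word.induct) (auto split: if_splits)

lemma merge_word_eq_x_Cons:
  "merge_word xs ys = True # r \<Longrightarrow>
    \<exists>x xs'. xs = x # xs' \<and> (ys = [] \<or> x \<le> hd ys) \<and> merge_word xs' ys = r"
  by (induction xs ys rule: merge_word.induct) (auto split: if_splits)

lemma merge_word_eq_y_Cons:
  "merge_word xs ys = False # r \<Longrightarrow>
    \<exists>y ys'. ys = y # ys' \<and> (xs = [] \<or> y < hd xs) \<and> merge_word xs ys' = r"
  by (induction xs ys rule: merge_word.induct) (auto split: if_splits)

lemma merge_word_x_Cons: "\<forall>y\<in>set ys. x \<le> y \<Longrightarrow> merge_word (x # xs) ys = True # merge_word xs ys"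
  by (cases ys) auto

lemma merge_word_y_Cons: "\<forall>x\<in>set xs. y < x \<Longrightarrow> merge_word xs (y # ys) = False # merge_word xs ys"
  by (cases xs) auto

lemma merge_word_map:
  "\<forall>u\<in>set xs \<union> set ys. \<forall>v\<in>set xs \<union> set ys. f u \<le> f v \<longleftrightarrow> u \<le> v \<Longrightarrow>
    merge_word (map f xs) (map f ys) = merge_word xs ys"
  by (induction xs ys rule: merge_word.induct) auto

text \<open>In a pair with word \<open>c # r\<close> the entry marked \<open>c\<close> is smaller than the next entry by at
  least \<open>gap c r\<close> (an \<open>x\<close> may equal the following \<open>y\<close>); hence \<open>min_weight r\<close> is the least
  weight of a pair with word \<open>r\<close>.\<close>
definition gap :: "bool \<Rightarrow> bool list \<Rightarrow> nat" where
  "gap c r = (if r = [] \<or> c \<and> \<not> hd r then 0 else 1)"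

fun min_weight :: "bool list \<Rightarrow> nat" where
  "min_weight [] = 0"
| "min_weight (c # r) = min_weight r + gap c r * length r"

lemma gap_le_1: "gap c r \<le> 1"
  by (simp add: gap_def)

text \<open>The state is (number of blocks, sign of the last block).\<close>
definition add_sign :: "nat \<times> bool \<Rightarrow> bool \<Rightarrow> nat \<times> bool" where
  "add_sign st s = (if fst st = 0 then 1 else if snd st = s then fst st else Suc (fst st), s)"

text \<open>The sign of the \<open>i\<close>-th column is the letter preceding the \<open>i\<close>-th balanced suffix of the
  word (the empty suffix being the first), see \<open>word_blocks_merge_word\<close>.\<close>
fun word_blocks :: "bool list \<Rightarrow> nat \<times> bool" where
  "word_blocks [] = (0, False)"
| "word_blocks (c # r) =
    (if count_x r = count_y r then add_sign (word_blocks r) c else word_blocks r)"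

lemma word_blocks_pos: "r \<noteq> [] \<Longrightarrow> 1 \<le> fst (word_blocks r)"
proof (induction r)
  case (Cons c r)
  then show ?case by (cases "r = []") (auto simp: add_sign_def word_blocks.simps)
qed simp

lemma word_blocks_unbalanced:
  "count_x r \<noteq> count_y r \<Longrightarrow> snd (word_blocks r) \<longleftrightarrow> count_y r < count_x r"
proof (induction r)
  case (Cons c r)
  then show ?case by (cases "count_x r = count_y r") (auto simp: add_sign_def)
qed simp

lemma word_blocks_balanced:
  assumes "r \<noteq> []" and "count_x r = count_y r"
  shows "snd (word_blocks r) \<longleftrightarrow> \<not> hd r"
proof -
  obtain c r' where r: "r = c # r'" using assms(1) by (cases r) auto
  have "count_x r' \<noteq> count_y r'" using assms(2) r by (cases c) auto
  moreover have "count_y r' < count_x r' \<longleftrightarrow> \<not> c" using assms(2) r by (cases c) auto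
  ultimately show ?thesis using word_blocks_unbalanced[of r'] r by simp
qed

declare word_blocks.simps(2) [simp del] min_weight.simps(2) [simp del]

definition pair_signs :: "nat list \<Rightarrow> nat list \<Rightarrow> bool list" where
  "pair_signs xs ys = map (\<lambda>i. rev ys ! i < rev xs ! i) [0..<min (length xs) (length ys)]"

definition sign_blocks :: "bool list \<Rightarrow> nat \<times> bool" where
  "sign_blocks s = foldl add_sign (0, False) s"

lemma sign_blocks_snoc: "sign_blocks (s @ [t]) = add_sign (sign_blocks s) t"
  by (simp add: sign_blocks_def)

lemma add_sign_idem: "add_sign (add_sign st s) s = add_sign st s"
  by (simp add: add_sign_def)

lemma sign_blocks_eq: "s \<noteq> [] \<Longrightarrow> sign_blocks s = (length (remdups_adj s), last s)"
proof (induction s rule: rev_induct)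
  case (snoc t s)
  show ?case
  proof (cases "s = []")
    case False
    have "remdups_adj (s @ [t]) = remdups_adj s @ (if t = last s then [] else [t])"
      using remdups_adj_append''[OF False, of "[t]"] by simp
    moreover have "1 \<le> length (remdups_adj s)" using False by simp
    ultimately show ?thesis using snoc.IH[OF False] False
      by (auto simp: sign_blocks_snoc add_sign_def)
  qed (simp add: sign_blocks_def add_sign_def)
qed simp

lemma pair_signs_Cons_x:
  assumes "\<forall>y\<in>set ys. x \<le> y"
  shows "pair_signs (x # xs) ys =
    pair_signs xs ys @ (if length xs < length ys then [False] else [])"
proof -
  have "rev ys ! length xs \<in> set ys" if "length xs < length ys"
    using that by (simp add: rev_nth)
  then have "length xs < length ys \<Longrightarrow> \<not> rev ys ! length xs < x" using assms by (meson not_less)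
  then show ?thesis
    by (auto simp: pair_signs_def nth_append min_def intro!: map_cong)
qed

lemma pair_signs_Cons_y:
  assumes "\<forall>x\<in>set xs. y < x"
  shows "pair_signs xs (y # ys) =
    pair_signs xs ys @ (if length ys < length xs then [True] else [])"
proof (cases "length ys < length xs")
  case True
  then have "y < rev xs ! length ys" using assms by (simp add: rev_nth)
  moreover have "min (length xs) (Suc (length ys)) = Suc (length ys)" using True by simp
  ultimately show ?thesis using True by (auto simp: pair_signs_def nth_append intro!: map_cong)
next
  case False
  then have "min (length xs) (Suc (length ys)) = min (length xs) (length ys)" by simp
  then show ?thesis using False by (auto simp: pair_signs_def nth_append intro!: map_cong)
qed

lemma word_blocks_merge_word:
  "sorted_wrt (<) xs \<Longrightarrow> sorted_wrt (<) ys \<Longrightarrow> word_blocks (merge_word xs ys) =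
    (if length xs = length ys then sign_blocks (pair_signs xs ys)
     else add_sign (sign_blocks (pair_signs xs ys)) (length ys < length xs))"
proof (induction xs ys rule: merge_word.induct)
  case (4 x xs y ys)
  show ?case
  proof (cases "x \<le> y")
    case True
    then have "pair_signs (x # xs) (y # ys)
        = pair_signs xs (y # ys) @ (if length xs < length (y # ys) then [False] else [])"
      using "4.prems"(2) by (intro pair_signs_Cons_x) auto
    then show ?thesis using True "4.IH"(1) "4.prems"
      by (auto simp: word_blocks.simps sign_blocks_snoc add_sign_idem)
  next
    case False
    then have "pair_signs (x # xs) (y # ys)
        = pair_signs (x # xs) ys @ (if length ys < length (x # xs) then [True] else [])"
      using "4.prems"(1) by (intro pair_signs_Cons_y) auto
    then show ?thesis using False "4.IH"(2) "4.prems"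
      by (auto simp: word_blocks.simps sign_blocks_snoc add_sign_idem)
  qed
qed (simp_all add: word_blocks.simps sign_blocks_def pair_signs_def add_sign_def)

section \<open>Pairs with a given merge word\<close>

lemma sorted_wrt_less_hd_le: "sorted_wrt (<) zs \<Longrightarrow> u \<in> set zs \<Longrightarrow> hd zs \<le> (u :: nat)"
  by (cases zs) auto

lemma sorted_map_minus:
  "sorted_wrt (<) zs \<Longrightarrow> \<forall>v\<in>set zs. s \<le> v \<Longrightarrow> sorted_wrt (<) (map (\<lambda>v. v - s) zs :: nat list)"
  by (induction zs) (auto simp: sorted_wrt_map)

definition word_pairs :: "bool list \<Rightarrow> (nat list \<times> nat list) set" where
  "word_pairs r =
    {p. sorted_wrt (<) (fst p) \<and> sorted_wrt (<) (snd p) \<and> merge_word (fst p) (snd p) = r}"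

definition pair_weight :: "nat list \<times> nat list \<Rightarrow> nat" where
  "pair_weight p = sum_list (fst p) + sum_list (snd p)"

definition pair_set :: "nat list \<times> nat list \<Rightarrow> nat set" where
  "pair_set p = set (fst p) \<union> set (snd p)"

definition shift_pair :: "nat \<Rightarrow> nat list \<times> nat list \<Rightarrow> nat list \<times> nat list" where
  "shift_pair s p = (map (\<lambda>v. v + s) (fst p), map (\<lambda>v. v + s) (snd p))"

definition cons_pair :: "bool \<Rightarrow> nat \<Rightarrow> nat list \<times> nat list \<Rightarrow> nat list \<times> nat list" where
  "cons_pair c v p = (if c then (v # fst p, snd p) else (fst p, v # snd p))"

lemma pair_set_cons_pair [simp]: "pair_set (cons_pair c v p) = insert v (pair_set p)"
  by (auto simp: pair_set_def cons_pair_def)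

lemma pair_weight_cons_pair [simp]: "pair_weight (cons_pair c v p) = v + pair_weight p"
  by (simp add: pair_weight_def cons_pair_def)

lemma inj_cons_pair: "inj (cons_pair c v)"
  by (rule injI) (auto simp: cons_pair_def prod_eq_iff split: if_splits)

lemma inj_shift_pair: "inj (shift_pair s)"
  by (rule injI) (auto simp: shift_pair_def prod_eq_iff)

lemma word_pairs_Nil: "word_pairs [] = {([], [])}"
  by (auto simp: word_pairs_def dest: merge_word_eq_Nil)

lemma word_pairs_gap_x_less:
  assumes q: "(xs, ys) \<in> word_pairs r" and ge: "\<forall>u\<in>set xs \<union> set ys. v + gap True r \<le> u"
  shows "\<forall>u\<in>set xs. v < u"
proof (cases "gap True r = 0 \<and> xs \<noteq> []")
  case True
  then obtain x xs' where xs: "xs = x # xs'" by (auto simp: neq_Nil_conv)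
  then have "r \<noteq> []" using q by (auto simp: word_pairs_def dest: merge_word_eq_Nil)
  then obtain r' where "r = False # r'"
    using True by (cases r) (auto simp: gap_def split: if_splits)
  then obtain y ys' where "ys = y # ys'" "y < x"
    using merge_word_eq_y_Cons[of xs ys] q xs by (auto simp: word_pairs_def)
  then show ?thesis using q ge xs True by (fastforce simp: word_pairs_def)
next
  case False
  show ?thesis
  proof
    fix u assume "u \<in> set xs"
    then have "v + gap True r \<le> u" "1 \<le> gap True r" using ge False by auto
    then show "v < u" by linarith
  qed
qed

lemma word_pairs_gap_y_less:
  assumes q: "(xs, ys) \<in> word_pairs r" and ge: "\<forall>u\<in>set xs \<union> set ys. v + gap False r \<le> u"
  shows "\<forall>u\<in>set xs \<union> set ys. v < u"
proof (cases "r = []")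
  case True
  then show ?thesis using q merge_word_eq_Nil[of xs ys] by (simp add: word_pairs_def)
next
  case False
  then show ?thesis using ge by (auto simp: gap_def Suc_le_eq)
qed

lemma cons_pair_in_word_pairs:
  assumes q: "q \<in> word_pairs r" and ge: "\<forall>u\<in>pair_set q. v + gap c r \<le> u"
  shows "cons_pair c v q \<in> word_pairs (c # r)"
proof -
  obtain xs ys where qe: "q = (xs, ys)" by fastforce
  have P: "sorted_wrt (<) xs" "sorted_wrt (<) ys" "merge_word xs ys = r"
    using q qe by (auto simp: word_pairs_def)
  have ge': "\<forall>u\<in>set xs \<union> set ys. v + gap c r \<le> u" using ge qe by (simp add: pair_set_def)
  then have ys: "\<forall>u\<in>set ys. v \<le> u" by (auto intro: add_leD1)
  show ?thesis
  proof (cases c)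
    case True
    then show ?thesis using P qe word_pairs_gap_x_less[of xs ys r v] q ge' merge_word_x_Cons[OF ys]
      by (simp add: word_pairs_def cons_pair_def)
  next
    case False
    then show ?thesis using P qe word_pairs_gap_y_less[of xs ys r v] q ge' merge_word_y_Cons[of xs v ys]
      by (simp add: word_pairs_def cons_pair_def)
  qed
qed

lemma word_pairs_x_Cons_cases:
  assumes "(xs, ys) \<in> word_pairs (True # r)"
  obtains x xs' where "xs = x # xs'" and "(xs', ys) \<in> word_pairs r"
    and "\<forall>u\<in>set xs' \<union> set ys. x + gap True r \<le> u"
proof -
  have P: "sorted_wrt (<) xs" "sorted_wrt (<) ys" "merge_word xs ys = True # r"
    using assms by (auto simp: word_pairs_def)
  then obtain x xs' where xs: "xs = x # xs'" and x: "ys = [] \<or> x \<le> hd ys"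
    and r: "merge_word xs' ys = r"
    using merge_word_eq_x_Cons by blast
  have "\<forall>u\<in>set ys. x + gap True r \<le> u"
  proof (cases "gap True r = 0")
    case False
    then obtain r' where "r = True # r'" by (cases r) (auto simp: gap_def split: if_splits)
    then obtain x' xs'' where "xs' = x' # xs''" "ys = [] \<or> x' \<le> hd ys"
      using merge_word_eq_x_Cons r by blast
    then show ?thesis using P(1,2) xs False by (fastforce simp: gap_def dest: sorted_wrt_less_hd_le)
  qed (use P(2) x in \<open>auto dest: sorted_wrt_less_hd_le\<close>)
  moreover have "\<forall>u\<in>set xs'. x + gap True r \<le> u" using P(1) xs by (auto simp: gap_def)
  ultimately show ?thesis using that[of x xs'] P r xs by (auto simp: word_pairs_def)
qed

lemma word_pairs_y_Cons_cases:
  assumes "(xs, ys) \<in> word_pairs (False # r)"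
  obtains y ys' where "ys = y # ys'" and "(xs, ys') \<in> word_pairs r"
    and "\<forall>u\<in>set xs \<union> set ys'. y + gap False r \<le> u"
proof -
  have P: "sorted_wrt (<) xs" "sorted_wrt (<) ys" "merge_word xs ys = False # r"
    using assms by (auto simp: word_pairs_def)
  then obtain y ys' where ys: "ys = y # ys'" and y: "xs = [] \<or> y < hd xs"
    and r: "merge_word xs ys' = r"
    using merge_word_eq_y_Cons by blast
  have "y + gap False r \<le> u" if "u \<in> set xs \<union> set ys'" for u
  proof -
    have "y + 1 \<le> u" using that P(1,2) ys y by (fastforce dest: sorted_wrt_less_hd_le)
    then show ?thesis using gap_le_1[of False r] by linarith
  qed
  then show ?thesis using that[of y ys'] P r ys by (auto simp: word_pairs_def)
qed

lemma word_pairs_Cons_cases: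
  assumes "p \<in> word_pairs (c # r)"
  obtains v q where "q \<in> word_pairs r" "\<forall>u\<in>pair_set q. v + gap c r \<le> u" "p = cons_pair c v q"
proof -
  obtain xs ys where p: "p = (xs, ys)" by fastforce
  show ?thesis
  proof (cases c)
    case True
    then have "(xs, ys) \<in> word_pairs (True # r)" using assms p by simp
    then obtain x xs' where "xs = x # xs'" and "(xs', ys) \<in> word_pairs r"
      and "\<forall>u\<in>set xs' \<union> set ys. x + gap True r \<le> u"
      by (rule word_pairs_x_Cons_cases)
    then show ?thesis using that[of "(xs', ys)" x] p True by (simp add: pair_set_def cons_pair_def)
  next
    case False
    then have "(xs, ys) \<in> word_pairs (False # r)" using assms p by simp
    then obtain y ys' where "ys = y # ys'" and "(xs, ys') \<in> word_pairs r"
      and "\<forall>u\<in>set xs \<union> set ys'. y + gap False r \<le> u"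
      by (rule word_pairs_y_Cons_cases)
    then show ?thesis using that[of "(xs, ys')" y] p False by (simp add: pair_set_def cons_pair_def)
  qed
qed

lemma word_pairs_with_zero:
  "{p \<in> word_pairs (c # r). pair_weight p = N \<and> 0 \<in> pair_set p}
    = cons_pair c 0 ` {q \<in> word_pairs r. pair_weight q = N \<and> (\<forall>u\<in>pair_set q. gap c r \<le> u)}"
proof
  show "cons_pair c 0 ` {q \<in> word_pairs r. pair_weight q = N \<and> (\<forall>u\<in>pair_set q. gap c r \<le> u)}
      \<subseteq> {p \<in> word_pairs (c # r). pair_weight p = N \<and> 0 \<in> pair_set p}"
    using cons_pair_in_word_pairs[where v = 0] by auto
next
  show "{p \<in> word_pairs (c # r). pair_weight p = N \<and> 0 \<in> pair_set p}
      \<subseteq> cons_pair c 0 ` {q \<in> word_pairs r. pair_weight q = N \<and> (\<forall>u\<in>pair_set q. gap c r \<le> u)}"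
  proof
    fix p assume p: "p \<in> {p \<in> word_pairs (c # r). pair_weight p = N \<and> 0 \<in> pair_set p}"
    then obtain v q where q: "q \<in> word_pairs r" "\<forall>u\<in>pair_set q. v + gap c r \<le> u"
      "p = cons_pair c v q"
      using word_pairs_Cons_cases by blast
    then have "v = 0" using p by fastforce
    then show "p \<in> cons_pair c 0 `
        {q \<in> word_pairs r. pair_weight q = N \<and> (\<forall>u\<in>pair_set q. gap c r \<le> u)}"
      using p q by auto
  qed
qed

lemma word_pairs_ge_eq_shift:
  "{p \<in> word_pairs r. \<forall>u\<in>pair_set p. s \<le> u} = shift_pair s ` word_pairs r"
proof
  show "shift_pair s ` word_pairs r \<subseteq> {p \<in> word_pairs r. \<forall>u\<in>pair_set p. s \<le> u}"
    using merge_word_map[of _ _ "\<lambda>v. v + s"]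
    by (auto simp: word_pairs_def shift_pair_def pair_set_def sorted_wrt_map)
next
  show "{p \<in> word_pairs r. \<forall>u\<in>pair_set p. s \<le> u} \<subseteq> shift_pair s ` word_pairs r"
  proof
    fix p assume p: "p \<in> {p \<in> word_pairs r. \<forall>u\<in>pair_set p. s \<le> u}"
    obtain xs ys where pe: "p = (xs, ys)" by fastforce
    let ?q = "(map (\<lambda>v. v - s) xs, map (\<lambda>v. v - s) ys)"
    have ge: "\<forall>u\<in>set xs \<union> set ys. s \<le> u" using p pe by (auto simp: pair_set_def)
    have "merge_word (map (\<lambda>v. v - s) xs) (map (\<lambda>v. v - s) ys) = merge_word xs ys"
      by (rule merge_word_map) (use ge in \<open>auto simp: le_diff_iff\<close>)
    then have "?q \<in> word_pairs r"
      using p pe ge sorted_map_minus[of xs s] sorted_map_minus[of ys s] by (auto simp: word_pairs_def)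
    moreover have "shift_pair s ?q = p" using pe ge by (auto simp: shift_pair_def map_idI)
    ultimately show "p \<in> shift_pair s ` word_pairs r" by force
  qed
qed

lemma pair_weight_shift_pair:
  "q \<in> word_pairs r \<Longrightarrow> pair_weight (shift_pair s q) = pair_weight q + s * length r"
proof -
  have "sum_list (map (\<lambda>v. v + s) zs) = sum_list zs + s * length zs" for zs :: "nat list"
    by (induction zs) auto
  then show "q \<in> word_pairs r \<Longrightarrow> ?thesis"
    by (auto simp: pair_weight_def shift_pair_def word_pairs_def algebra_simps)
qed

definition pair_count :: "bool list \<Rightarrow> nat \<Rightarrow> nat" where
  "pair_count r N = card {p \<in> word_pairs r. pair_weight p = N}"

lemma finite_word_pairs_weight: "finite {p \<in> word_pairs r. pair_weight p = N}"
proof -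
  let ?L = "{xs. set xs \<subseteq> {..N} \<and> length xs \<le> length r}"
  have "{p \<in> word_pairs r. pair_weight p = N} \<subseteq> ?L \<times> ?L"
  proof
    fix p assume p: "p \<in> {p \<in> word_pairs r. pair_weight p = N}"
    obtain xs ys where pe: "p = (xs, ys)" by fastforce
    have "merge_word xs ys = r" "sum_list xs + sum_list ys = N"
      using p pe by (auto simp: word_pairs_def pair_weight_def)
    then show "p \<in> ?L \<times> ?L"
      using pe member_le_sum_list[of _ xs] member_le_sum_list[of _ ys] by fastforce
  qed
  moreover have "finite (?L \<times> ?L)" using finite_lists_length_le[of "{..N}"] by simp
  ultimately show ?thesis by (rule finite_subset)
qed

lemma card_word_pairs_shifted:
  "card {q \<in> word_pairs r. pair_weight q + k = N} = (if k \<le> N then pair_count r (N - k) else 0)"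
proof -
  have "{q \<in> word_pairs r. pair_weight q + k = N}
      = (if k \<le> N then {q \<in> word_pairs r. pair_weight q = N - k} else {})"
    by auto
  then show ?thesis by (simp add: pair_count_def)
qed

lemma card_word_pairs_ge:
  "card {p \<in> word_pairs r. pair_weight p = N \<and> (\<forall>u\<in>pair_set p. s \<le> u)}
    = card {q \<in> word_pairs r. pair_weight q + s * length r = N}"
proof -
  have "{p \<in> word_pairs r. pair_weight p = N \<and> (\<forall>u\<in>pair_set p. s \<le> u)}
      = {p \<in> shift_pair s ` word_pairs r. pair_weight p = N}"
    by (simp only: word_pairs_ge_eq_shift[symmetric]) auto
  also have "\<dots> = shift_pair s ` {q \<in> word_pairs r. pair_weight q + s * length r = N}"
    using pair_weight_shift_pair[of _ r s] by force
  finally show ?thesis using inj_shift_pair by (simp add: card_image inj_on_def)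
qed

text \<open>A pair containing \<open>0\<close> starts with \<open>0\<close>; the other pairs are translates by \<open>1\<close>.\<close>
lemma pair_count_Cons:
  "pair_count (c # r) N = card {q \<in> word_pairs (c # r). pair_weight q + Suc (length r) = N}
     + card {q \<in> word_pairs r. pair_weight q + gap c r * length r = N}"
proof -
  let ?A = "{p \<in> word_pairs (c # r). pair_weight p = N \<and> (\<forall>u\<in>pair_set p. 1 \<le> u)}"
  let ?B = "{p \<in> word_pairs (c # r). pair_weight p = N \<and> 0 \<in> pair_set p}"
  have split: "{p \<in> word_pairs (c # r). pair_weight p = N} = ?A \<union> ?B"
    by (fastforce simp: Suc_le_eq intro: gr0I)
  have fin: "finite ?A" "finite ?B"
    by (rule finite_subset[OF _ finite_word_pairs_weight[of "c # r" N]]; auto)+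
  have "pair_count (c # r) N = card ?A + card ?B"
    unfolding pair_count_def split by (rule card_Un_disjoint[OF fin]) auto
  moreover have "card ?A = card {q \<in> word_pairs (c # r). pair_weight q + Suc (length r) = N}"
    using card_word_pairs_ge[of "c # r" N 1] by simp
  moreover have
    "card ?B = card {q \<in> word_pairs r. pair_weight q = N \<and> (\<forall>u\<in>pair_set q. gap c r \<le> u)}"
    unfolding word_pairs_with_zero using inj_cons_pair by (simp add: card_image inj_on_def)
  ultimately show ?thesis using card_word_pairs_ge[of r N "gap c r"] by simp
qed

definition pair_gf :: "bool list \<Rightarrow> rat fps" where
  "pair_gf r = Abs_fps (\<lambda>N. of_nat (pair_count r N))"

lemma pair_gf_Cons:
  "pair_gf (c # r) = fps_X ^ Suc (length r) * pair_gf (c # r)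
      + fps_X ^ (gap c r * length r) * pair_gf r"
proof (rule fps_ext)
  fix N
  show "fps_nth (pair_gf (c # r)) N
      = fps_nth (fps_X ^ Suc (length r) * pair_gf (c # r)
        + fps_X ^ (gap c r * length r) * pair_gf r) N"
    using pair_count_Cons[of c r N]
    unfolding pair_gf_def fps_add_nth fps_X_power_mult_nth fps_nth_Abs_fps card_word_pairs_shifted
    by (simp add: not_less)
qed

lemma pair_gf_mult_qpoch: "pair_gf r * qpoch fps_X (length r) = fps_X ^ min_weight r"
proof (induction r)
  case Nil
  have "{p \<in> word_pairs []. pair_weight p = N} = (if N = 0 then {([], [])} else {})" for N
    by (auto simp: word_pairs_Nil pair_weight_def)
  then have "pair_gf [] = 1"
    by (intro fps_ext) (simp add: pair_gf_def pair_count_def)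
  then show ?case by simp
next
  case (Cons c r)
  let ?G = "pair_gf (c # r)" and ?L = "length r"
  have "?G * (1 - fps_X ^ Suc ?L) = fps_X ^ (gap c r * ?L) * pair_gf r"
    using pair_gf_Cons[of c r] by (simp add: algebra_simps)
  then have "?G * qpoch fps_X (Suc ?L) = fps_X ^ (gap c r * ?L) * (pair_gf r * qpoch fps_X ?L)"
    by (simp add: qpoch_X_Suc mult_ac)
  then show ?case using Cons.IH by (simp add: min_weight.simps power_add mult.commute)
qed

section \<open>Sums over classes of words\<close>

definition words :: "nat \<Rightarrow> bool list set" where
  "words n = {r. length r = n}"

lemma finite_words: "finite (words n)"
  using finite_lists_length_eq[of "UNIV :: bool set" n] by (simp add: words_def)

lemma sum_words_Suc:
  "(\<Sum>r\<in>words (Suc n). f r) = (\<Sum>r\<in>words n. f (True # r)) + (\<Sum>r\<in>words n. f (False # r))"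
proof -
  have "words (Suc n) = Cons True ` words n \<union> Cons False ` words n"
    by (auto simp: words_def length_Suc_conv)
  then have "(\<Sum>r\<in>words (Suc n). f r) = (\<Sum>r\<in>Cons True ` words n. f r)
      + (\<Sum>r\<in>Cons False ` words n. f r)"
    by (simp, intro sum.union_disjoint) (auto simp: finite_words)
  then show ?thesis by (simp add: sum.reindex)
qed

definition word_class :: "nat \<Rightarrow> bool \<Rightarrow> nat \<Rightarrow> bool \<Rightarrow> bool list \<Rightarrow> bool" where
  "word_class a \<sigma> R l r \<longleftrightarrow>
     count_x r = a \<and> r \<noteq> [] \<and> hd r = l \<and> snd (word_blocks r) = \<sigma> \<and> R \<le> fst (word_blocks r)"

definition class_term :: "nat \<Rightarrow> bool \<Rightarrow> nat \<Rightarrow> bool \<Rightarrow> bool list \<Rightarrow> rat fps" where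
  "class_term a \<sigma> R l r = (if word_class a \<sigma> R l r then fps_X ^ min_weight r else 0)"

definition class_gf :: "nat \<Rightarrow> nat \<Rightarrow> bool \<Rightarrow> nat \<Rightarrow> bool \<Rightarrow> rat fps" where
  "class_gf a b \<sigma> R l = (\<Sum>r\<in>words (a + b). class_term a \<sigma> R l r)"

lemma class_gf_Cons:
  assumes "a + b = Suc n"
  shows "class_gf a b \<sigma> R l = (\<Sum>r\<in>words n. class_term a \<sigma> R l (l # r))"
proof -
  have "class_term a \<sigma> R (\<not> l) (l # r) = 0" for r
    by (simp add: class_term_def word_class_def)
  then show ?thesis
    unfolding class_gf_def assms sum_words_Suc by (cases l) (simp_all add: class_term_def word_class_def)
qed

lemma class_gf_0_x: "class_gf 0 b \<sigma> R True = 0"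
proof -
  have "\<not> word_class 0 \<sigma> R True r" for r
    by (auto simp: word_class_def neq_Nil_conv)
  then show ?thesis by (simp add: class_gf_def class_term_def)
qed

lemma class_gf_0_y: "class_gf a 0 \<sigma> R False = 0"
proof -
  have "\<not> word_class a \<sigma> R False r" if "length r = a" for r
    using count_x_add_count_y[of r] that by (auto simp: word_class_def neq_Nil_conv)
  then show ?thesis by (simp add: class_gf_def class_term_def words_def)
qed

lemma class_gf_empty: "class_gf 0 0 \<sigma> R l = 0"
  by (simp add: class_gf_def class_term_def word_class_def words_def)

lemma class_term_x_unbalanced:
  assumes "length r = a + b" and "a \<noteq> b"
  shows "class_term (Suc a) \<sigma> R True (True # r)
    = fps_X ^ (a + b) * class_term a \<sigma> R True r + class_term a \<sigma> R False r"
proof (cases "count_x r = a")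
  case True
  then have "count_x r \<noteq> count_y r" using count_x_add_count_y[of r] assms by simp
  then have blocks: "word_blocks (True # r) = word_blocks r" by (simp add: word_blocks.simps)
  have "r \<noteq> []" using assms by auto
  then show ?thesis using True blocks assms(1)
    by (cases "hd r") (simp_all add: class_term_def word_class_def gap_def min_weight.simps
      power_add)
qed (simp add: class_term_def word_class_def)

lemma class_term_y_unbalanced:
  assumes "length r = a + b" and "a \<noteq> b"
  shows "class_term a \<sigma> R False (False # r)
    = fps_X ^ (a + b) * (class_term a \<sigma> R True r + class_term a \<sigma> R False r)"
proof (cases "count_x r = a")
  case True
  then have "count_x r \<noteq> count_y r" using count_x_add_count_y[of r] assms by simp
  then have blocks: "word_blocks (False # r) = word_blocks r" by (simp add: word_blocks.simps)
  have "r \<noteq> []" using assms by auto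
  then show ?thesis using True blocks assms(1)
    by (cases "hd r") (simp_all add: class_term_def word_class_def gap_def min_weight.simps
      power_add)
qed (simp add: class_term_def word_class_def)

lemma class_term_x_balanced:
  assumes "length r = b + b" and "0 < b" and "1 \<le> R"
  shows "class_term (Suc b) \<sigma> R True (True # r) = (if \<sigma> then
    fps_X ^ (2 * b) * class_term b False (max 1 (R - 1)) True r
      + class_term b True R False r else 0)"
proof (cases "count_x r = b")
  case True
  have ne: "r \<noteq> []" using assms by auto
  have bal: "count_x r = count_y r" using count_x_add_count_y[of r] True assms(1) by simp
  obtain B where "word_blocks r = (B, \<not> hd r)" "1 \<le> B"
    using word_blocks_balanced[OF ne bal] word_blocks_pos[OF ne] by (cases "word_blocks r") auto
  then show ?thesis
    using ne bal True assms(1,3)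
    by (cases "hd r") (auto simp: class_term_def word_class_def gap_def min_weight.simps
        word_blocks.simps add_sign_def power_add mult_2)
qed (simp add: class_term_def word_class_def)

lemma class_term_y_balanced:
  assumes "length r = a + a" and "0 < a" and "1 \<le> R"
  shows "class_term a \<sigma> R False (False # r) = (if \<not> \<sigma> then
    fps_X ^ (2 * a) * (class_term a False R True r
      + class_term a True (max 1 (R - 1)) False r) else 0)"
proof (cases "count_x r = a")
  case True
  have ne: "r \<noteq> []" using assms by auto
  have bal: "count_x r = count_y r" using count_x_add_count_y[of r] True assms(1) by simp
  obtain B where "word_blocks r = (B, \<not> hd r)" "1 \<le> B"
    using word_blocks_balanced[OF ne bal] word_blocks_pos[OF ne] by (cases "word_blocks r") auto
  then show ?thesis
    using ne bal True assms(1,3)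
    by (cases "hd r") (auto simp: class_term_def word_class_def gap_def min_weight.simps
        word_blocks.simps add_sign_def power_add mult_2)
qed (simp add: class_term_def word_class_def)

lemma class_gf_x_unbalanced:
  assumes "a \<noteq> b"
  shows "class_gf (Suc a) b \<sigma> R True = fps_X ^ (a + b) * class_gf a b \<sigma> R True
      + class_gf a b \<sigma> R False"
proof -
  have "class_gf (Suc a) b \<sigma> R True = (\<Sum>r\<in>words (a + b). class_term (Suc a) \<sigma> R True (True # r))"
    by (rule class_gf_Cons) simp
  also have "\<dots> = (\<Sum>r\<in>words (a + b). fps_X ^ (a + b) * class_term a \<sigma> R True r
      + class_term a \<sigma> R False r)"
    using class_term_x_unbalanced[OF _ assms] by (intro sum.cong) (auto simp: words_def)
  finally show ?thesis by (simp add: class_gf_def sum.distrib sum_distrib_left distrib_left)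
qed

lemma class_gf_y_unbalanced:
  assumes "a \<noteq> b"
  shows "class_gf a (Suc b) \<sigma> R False = fps_X ^ (a + b) * (class_gf a b \<sigma> R True
      + class_gf a b \<sigma> R False)"
proof -
  have "class_gf a (Suc b) \<sigma> R False = (\<Sum>r\<in>words (a + b). class_term a \<sigma> R False (False # r))"
    by (rule class_gf_Cons) simp
  also have "\<dots> = (\<Sum>r\<in>words (a + b). fps_X ^ (a + b) * (class_term a \<sigma> R True r
      + class_term a \<sigma> R False r))"
    using class_term_y_unbalanced[OF _ assms] by (intro sum.cong) (auto simp: words_def)
  finally show ?thesis by (simp add: class_gf_def sum.distrib sum_distrib_left distrib_left)
qed

lemma class_gf_x_balanced:
  assumes "1 \<le> R"
  shows "class_gf (Suc b) b \<sigma> R True = (if \<sigma> then (if b = 0 then (if R \<le> 1 then 1 else 0)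
    else fps_X ^ (2 * b) * class_gf b b False (max 1 (R - 1)) True
      + class_gf b b True R False) else 0)"
proof (cases "b = 0")
  case True
  then show ?thesis using class_gf_Cons[of 1 0 0 \<sigma> R True]
    by (simp add: words_def class_term_def word_class_def add_sign_def word_blocks.simps
        min_weight.simps gap_def)
next
  case False
  have "class_gf (Suc b) b \<sigma> R True = (\<Sum>r\<in>words (b + b). class_term (Suc b) \<sigma> R True (True # r))"
    by (rule class_gf_Cons) simp
  also have "\<dots> = (\<Sum>r\<in>words (b + b). if \<sigma> then fps_X ^ (2 * b)
      * class_term b False (max 1 (R - 1)) True r
      + class_term b True R False r else 0)"
    using class_term_x_balanced[OF _ _ assms] False by (intro sum.cong) (auto simp: words_def)
  finally show ?thesis
    using False by (simp add: class_gf_def sum.distrib sum_distrib_left distrib_left)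
qed

lemma class_gf_y_balanced:
  assumes "1 \<le> R"
  shows "class_gf a (Suc a) \<sigma> R False = (if \<not> \<sigma> then (if a = 0 then (if R \<le> 1 then 1 else 0)
    else fps_X ^ (2 * a) * (class_gf a a False R True
      + class_gf a a True (max 1 (R - 1)) False)) else 0)"
proof (cases "a = 0")
  case True
  then show ?thesis using class_gf_Cons[of 0 1 0 \<sigma> R False]
    by (simp add: words_def class_term_def word_class_def add_sign_def word_blocks.simps
        min_weight.simps gap_def)
next
  case False
  have "class_gf a (Suc a) \<sigma> R False = (\<Sum>r\<in>words (a + a). class_term a \<sigma> R False (False # r))"
    by (rule class_gf_Cons) simp
  also have "\<dots> = (\<Sum>r\<in>words (a + a). if \<not> \<sigma> then fps_X ^ (2 * a)
      * (class_term a False R True r + class_term a True (max 1 (R - 1)) False r) else 0)"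
    using class_term_y_balanced[OF _ _ assms] False by (intro sum.cong) (auto simp: words_def)
  finally show ?thesis
    using False by (simp add: class_gf_def sum.distrib sum_distrib_left distrib_left)
qed

section \<open>Closed forms\<close>

fun tri :: "nat \<Rightarrow> nat" where
  "tri 0 = 0"
| "tri (Suc n) = tri n + n"

lemma tri_eq: "tri n + tri n + n = n * n"
  by (induction n) (auto simp: algebra_simps)

lemma tri_eq_choose_two: "tri n = n choose 2"
proof -
  have "2 * tri n = n * (n - 1)" using tri_eq[of n] by (cases n) (auto simp: algebra_simps)
  then show ?thesis by (simp add: choose_two)
qed

text \<open>The closed forms of \<open>class_gf a b \<sigma> R l\<close> for last sign \<open>\<sigma>\<close> positive/negative and first
  letter \<open>l\<close> an \<open>x\<close>/\<open>y\<close>, see \<open>class_gf_eq_closed\<close>.\<close>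
definition cf_pos_x :: "nat \<Rightarrow> nat \<Rightarrow> nat \<Rightarrow> rat fps" where
  "cf_pos_x a b R = (if b < a \<and> R \<le> Suc b
     then fps_X ^ (tri a + tri b + (R - 1) * (a - b - 1) + tri R)
         * qbin (a + b - 1) (Suc b - R) else 0)"

definition cf_pos_y :: "nat \<Rightarrow> nat \<Rightarrow> nat \<Rightarrow> rat fps" where
  "cf_pos_y a b R = (if b \<le> a \<and> R \<le> b
     then fps_X ^ (tri a + tri b + a + (R - 1) * (a - b) + tri R)
         * qbin (a + b - 1) (b - R) else 0)"

definition cf_neg_x :: "nat \<Rightarrow> nat \<Rightarrow> nat \<Rightarrow> rat fps" where
  "cf_neg_x a b R = (if a \<le> b \<and> R \<le> a
     then fps_X ^ (tri a + tri b + (R - 1) * (b - a) + tri R) * qbin (a + b - 1) (a - R) else 0)"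

definition cf_neg_y :: "nat \<Rightarrow> nat \<Rightarrow> nat \<Rightarrow> rat fps" where
  "cf_neg_y a b R = (if a < b \<and> R \<le> Suc a
     then fps_X ^ (tri a + tri b + a + (R - 1) * (b - a - 1) + tri R)
         * qbin (a + b - 1) (Suc a - R) else 0)"

text \<open>The two \<open>q\<close>-Pascal rules, with the powers of \<open>X\<close> arranged as they occur in the closed
  forms.\<close>
lemma pascal_pow_split: "e2 = e1 \<Longrightarrow> c + e3 = e1 + Suc k \<Longrightarrow>
  (fps_X::rat fps) ^ e1 * qbin (Suc m) (Suc k)
    = fps_X ^ c * (fps_X ^ e3 * qbin m (Suc k)) + fps_X ^ e2 * qbin m k"
proof -
  assume h: "e2 = e1" "c + e3 = e1 + Suc k"
  have "(fps_X::rat fps) ^ c * (fps_X ^ e3 * qbin m (Suc k)) = fps_X ^ (c + e3) * qbin m (Suc k)"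
    by (simp only: power_add mult.assoc)
  also have "\<dots> = fps_X ^ e1 * (fps_X ^ Suc k * qbin m (Suc k))"
    by (simp only: h(2) power_add mult.assoc)
  finally show ?thesis unfolding h(1) qbin_pascal by (simp only: distrib_left add.commute)
qed

lemma pascal'_pow_split: "k \<le> m \<Longrightarrow> e2 = e1 \<Longrightarrow> c + e3 = e1 + (m - k) \<Longrightarrow>
  (fps_X::rat fps) ^ e1 * qbin (Suc m) (Suc k)
    = fps_X ^ c * (fps_X ^ e3 * qbin m k) + fps_X ^ e2 * qbin m (Suc k)"
proof -
  assume h: "k \<le> m" "e2 = e1" "c + e3 = e1 + (m - k)"
  have "(fps_X::rat fps) ^ c * (fps_X ^ e3 * qbin m k) = fps_X ^ (c + e3) * qbin m k"
    by (simp only: power_add mult.assoc)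
  also have "\<dots> = fps_X ^ e1 * (fps_X ^ (m - k) * qbin m k)"
    by (simp only: h(3) power_add mult.assoc)
  finally show ?thesis unfolding h(2) qbin_pascal'[OF h(1)] by (simp only: distrib_left add.commute)
qed

lemma pascal'_pow_factor: "k \<le> m \<Longrightarrow> c + e2 = e1 \<Longrightarrow> c + e3 = e1 + (m - k) \<Longrightarrow>
  (fps_X::rat fps) ^ e1 * qbin (Suc m) (Suc k)
    = fps_X ^ c * (fps_X ^ e2 * qbin m (Suc k) + fps_X ^ e3 * qbin m k)"
proof -
  assume h: "k \<le> m" "c + e2 = e1" "c + e3 = e1 + (m - k)"
  have "(fps_X::rat fps) ^ c * (fps_X ^ e2 * qbin m (Suc k) + fps_X ^ e3 * qbin m k)
     = fps_X ^ (c + e2) * qbin m (Suc k) + fps_X ^ (c + e3) * qbin m k"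
    by (simp only: power_add mult.assoc distrib_left)
  also have "\<dots> = fps_X ^ e1 * qbin m (Suc k) + fps_X ^ e1 * (fps_X ^ (m - k) * qbin m k)"
    by (simp only: h(2) h(3) power_add mult.assoc)
  finally show ?thesis unfolding qbin_pascal'[OF h(1)] by (simp only: distrib_left)
qed

lemma pascal_pow_factor: "c + e2 = e1 \<Longrightarrow> c + e3 = e1 + Suc k \<Longrightarrow>
  (fps_X::rat fps) ^ e1 * qbin (Suc m) (Suc k)
    = fps_X ^ c * (fps_X ^ e2 * qbin m k + fps_X ^ e3 * qbin m (Suc k))"
proof -
  assume h: "c + e2 = e1" "c + e3 = e1 + Suc k"
  have "(fps_X::rat fps) ^ c * (fps_X ^ e2 * qbin m k + fps_X ^ e3 * qbin m (Suc k))
     = fps_X ^ (c + e2) * qbin m k + fps_X ^ (c + e3) * qbin m (Suc k)"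
    by (simp only: power_add mult.assoc distrib_left)
  also have "\<dots> = fps_X ^ e1 * qbin m k + fps_X ^ e1 * (fps_X ^ Suc k * qbin m (Suc k))"
    by (simp only: h(1) h(2) power_add mult.assoc)
  finally show ?thesis unfolding qbin_pascal by (simp only: distrib_left)
qed

lemma cf_pos_x_step:
  assumes ab: "a \<noteq> b" and R1: "1 \<le> R"
  shows "cf_pos_x (Suc a) b R = fps_X ^ (a + b) * cf_pos_x a b R + cf_pos_y a b R"
proof -
  obtain r where R: "R = Suc r" using R1 by (cases R) auto
  consider (z) "\<not> (b < a \<and> r \<le> b)" | (e) "b < a" "r = b" | (m) "b < a" "r < b"
    by linarith
  then show ?thesis
  proof cases
    case z
    then show ?thesis using ab by (auto simp: cf_pos_x_def cf_pos_y_def R)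
  next
    case e
    then obtain h where a: "a = Suc (b + h)" using less_iff_Suc_add by auto
    have l: "cf_pos_x (Suc a) b R = fps_X ^ (tri (Suc a) + tri b + b * Suc h + tri (Suc b))"
      by (simp add: cf_pos_x_def a R e)
    have r1: "cf_pos_x a b R = fps_X ^ (tri a + tri b + b * h + tri (Suc b))"
      by (simp add: cf_pos_x_def a R e)
    have r2: "cf_pos_y a b R = 0" by (simp add: cf_pos_y_def R e)
    show ?thesis unfolding l r1 r2 by (simp add: a power_add[symmetric] algebra_simps)
  next
    case m
    then obtain h where a: "a = Suc (b + h)" using less_iff_Suc_add by auto
    from m obtain k where b: "b = Suc (r + k)" using less_iff_Suc_add by auto
    have l: "cf_pos_x (Suc a) b R = fps_X ^ (tri (Suc a) + tri b + r * Suc h + tri (Suc r))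
        * qbin (Suc (a + r + k)) (Suc k)"
      by (simp add: cf_pos_x_def a b R ac_simps)
    have r1: "cf_pos_x a b R = fps_X ^ (tri a + tri b + r * h + tri (Suc r))
        * qbin (a + r + k) (Suc k)"
      by (simp add: cf_pos_x_def a b R ac_simps)
    have r2: "cf_pos_y a b R = fps_X ^ (tri a + tri b + a + r * Suc h + tri (Suc r))
        * qbin (a + r + k) k"
      by (simp add: cf_pos_y_def a b R ac_simps)
    show ?thesis unfolding l r1 r2 by (rule pascal_pow_split) (simp_all add: a b)
  qed
qed

lemma cf_neg_x_step:
  assumes ab: "a \<noteq> b" and R1: "1 \<le> R"
  shows "cf_neg_x (Suc a) b R = fps_X ^ (a + b) * cf_neg_x a b R + cf_neg_y a b R"
proof -
  obtain r where R: "R = Suc r" using R1 by (cases R) auto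
  consider (z) "\<not> (Suc a \<le> b \<and> r \<le> a)" | (e) "Suc a \<le> b" "r = a" | (m) "Suc a \<le> b" "r < a"
    by linarith
  then show ?thesis
  proof cases
    case z
    then show ?thesis using ab by (auto simp: cf_neg_x_def cf_neg_y_def R)
  next
    case e
    then have "\<exists>h. b = Suc (a + h)" by (simp add: le_iff_add)
    then obtain h where b: "b = Suc (a + h)" by blast
    have l: "cf_neg_x (Suc a) b R = fps_X ^ (tri (Suc a) + tri b + a * h + tri (Suc a))"
      by (simp add: cf_neg_x_def b R e)
    have r1: "cf_neg_x a b R = 0" by (simp add: cf_neg_x_def R e)
    have r2: "cf_neg_y a b R = fps_X ^ (tri a + tri b + a + a * h + tri (Suc a))"
      by (simp add: cf_neg_y_def b R e)
    show ?thesis unfolding l r1 r2 by (simp add: algebra_simps)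
  next
    case m
    then have "\<exists>h. b = Suc (a + h)" by (simp add: le_iff_add)
    then obtain h where b: "b = Suc (a + h)" by blast
    from m obtain k where a: "a = Suc (r + k)" using less_iff_Suc_add by auto
    have l: "cf_neg_x (Suc a) b R = fps_X ^ (tri (Suc a) + tri b + r * h + tri (Suc r))
        * qbin (Suc (a + a + h)) (Suc k)"
      by (simp add: cf_neg_x_def a b R ac_simps)
    have r1: "cf_neg_x a b R = fps_X ^ (tri a + tri b + r * Suc h + tri (Suc r))
        * qbin (a + a + h) k"
      by (simp add: cf_neg_x_def a b R ac_simps)
    have r2: "cf_neg_y a b R = fps_X ^ (tri a + tri b + a + r * h + tri (Suc r))
        * qbin (a + a + h) (Suc k)"
      by (simp add: cf_neg_y_def a b R ac_simps)
    show ?thesis unfolding l r1 r2 by (rule pascal'_pow_split) (simp_all add: a b)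
  qed
qed

lemma cf_pos_y_step:
  assumes ab: "a \<noteq> b" and R1: "1 \<le> R"
  shows "cf_pos_y a (Suc b) R = fps_X ^ (a + b) * (cf_pos_x a b R + cf_pos_y a b R)"
proof -
  obtain r where R: "R = Suc r" using R1 by (cases R) auto
  consider (z) "\<not> (Suc b \<le> a \<and> r \<le> b)" | (e) "Suc b \<le> a" "r = b" | (m) "Suc b \<le> a" "r < b"
    by linarith
  then show ?thesis
  proof cases
    case z
    then show ?thesis using ab by (auto simp: cf_pos_x_def cf_pos_y_def R)
  next
    case e
    then have "\<exists>h. a = Suc (b + h)" by (simp add: le_iff_add)
    then obtain h where a: "a = Suc (b + h)" by blast
    have l: "cf_pos_y a (Suc b) R = fps_X ^ (tri a + tri (Suc b) + a + b * h + tri (Suc b))"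
      by (simp add: cf_pos_y_def a R e)
    have r1: "cf_pos_x a b R = fps_X ^ (tri a + tri b + b * h + tri (Suc b))"
      by (simp add: cf_pos_x_def a R e)
    have r2: "cf_pos_y a b R = 0" by (simp add: cf_pos_y_def R e)
    show ?thesis unfolding l r1 r2 by (simp add: a power_add[symmetric] algebra_simps)
  next
    case m
    then have "\<exists>h. a = Suc (b + h)" by (simp add: le_iff_add)
    then obtain h where a: "a = Suc (b + h)" by blast
    from m obtain k where b: "b = Suc (r + k)" using less_iff_Suc_add by auto
    have l: "cf_pos_y a (Suc b) R = fps_X ^ (tri a + tri (Suc b) + a + r * h + tri (Suc r))
        * qbin (Suc (a + r + k)) (Suc k)"
      by (simp add: cf_pos_y_def a b R ac_simps)
    have r1: "cf_pos_x a b R = fps_X ^ (tri a + tri b + r * h + tri (Suc r))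
        * qbin (a + r + k) (Suc k)"
      by (simp add: cf_pos_x_def a b R ac_simps)
    have r2: "cf_pos_y a b R = fps_X ^ (tri a + tri b + a + r * Suc h + tri (Suc r))
        * qbin (a + r + k) k"
      by (simp add: cf_pos_y_def a b R ac_simps)
    show ?thesis unfolding l r1 r2 by (rule pascal'_pow_factor) (simp_all add: a b)
  qed
qed

lemma cf_neg_y_step:
  assumes ab: "a \<noteq> b" and R1: "1 \<le> R"
  shows "cf_neg_y a (Suc b) R = fps_X ^ (a + b) * (cf_neg_x a b R + cf_neg_y a b R)"
proof -
  obtain r where R: "R = Suc r" using R1 by (cases R) auto
  consider (z) "\<not> (a < b \<and> r \<le> a)" | (e) "a < b" "r = a" | (m) "a < b" "r < a"
    by linarith
  then show ?thesis
  proof cases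
    case z
    then show ?thesis using ab by (auto simp: cf_neg_x_def cf_neg_y_def R)
  next
    case e
    then obtain h where b: "b = Suc (a + h)" using less_iff_Suc_add by auto
    have l: "cf_neg_y a (Suc b) R = fps_X ^ (tri a + tri (Suc b) + a + a * Suc h + tri (Suc a))"
      by (simp add: cf_neg_y_def b R e)
    have r1: "cf_neg_x a b R = 0" by (simp add: cf_neg_x_def R e)
    have r2: "cf_neg_y a b R = fps_X ^ (tri a + tri b + a + a * h + tri (Suc a))"
      by (simp add: cf_neg_y_def b R e)
    show ?thesis unfolding l r1 r2 by (simp add: b power_add[symmetric] algebra_simps)
  next
    case m
    then obtain h where b: "b = Suc (a + h)" using less_iff_Suc_add by auto
    from m obtain k where a: "a = Suc (r + k)" using less_iff_Suc_add by auto
    have l: "cf_neg_y a (Suc b) R = fps_X ^ (tri a + tri (Suc b) + a + r * Suc h + tri (Suc r))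
        * qbin (Suc (a + a + h)) (Suc k)"
      by (simp add: cf_neg_y_def a b R ac_simps)
    have r1: "cf_neg_x a b R = fps_X ^ (tri a + tri b + r * Suc h + tri (Suc r))
        * qbin (a + a + h) k"
      by (simp add: cf_neg_x_def a b R ac_simps)
    have r2: "cf_neg_y a b R = fps_X ^ (tri a + tri b + a + r * h + tri (Suc r))
        * qbin (a + a + h) (Suc k)"
      by (simp add: cf_neg_y_def a b R ac_simps)
    show ?thesis unfolding l r1 r2 by (rule pascal_pow_factor) (simp_all add: a b)
  qed
qed

lemma cf_pos_x_balanced_step_1:
  assumes "1 \<le> b"
  shows "cf_pos_x (Suc b) b 1 = fps_X ^ (2 * b) * cf_neg_x b b 1 + cf_pos_y b b 1"
proof -
  obtain k where b: "b = Suc k" using assms by (cases b) auto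
  have l: "cf_pos_x (Suc b) b 1 = fps_X ^ (tri (Suc b) + tri b) * qbin (Suc (b + k)) (Suc k)"
    by (simp add: cf_pos_x_def b ac_simps)
  have r1: "cf_neg_x b b 1 = fps_X ^ (tri b + tri b) * qbin (b + k) (Suc k)"
    using qbin_middle_symmetric[of k] by (simp add: cf_neg_x_def b ac_simps)
  have r2: "cf_pos_y b b 1 = fps_X ^ (tri b + tri b + b) * qbin (b + k) k"
    by (simp add: cf_pos_y_def b ac_simps)
  show ?thesis unfolding l r1 r2 by (rule pascal_pow_split) (simp_all add: b)
qed

lemma cf_pos_x_balanced_step:
  assumes b1: "1 \<le> b" and R1: "1 \<le> R"
  shows "cf_pos_x (Suc b) b R = fps_X ^ (2 * b) * cf_neg_x b b (max 1 (R - 1)) + cf_pos_y b b R"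
proof -
  obtain r where R: "R = Suc r" using R1 by (cases R) auto
  consider (z) "b < r" | (e) "r = b" | (m) "1 \<le> r" "r < b" | (o) "r = 0"
    by linarith
  then show ?thesis
  proof cases
    case z
    then show ?thesis by (auto simp: cf_pos_x_def cf_pos_y_def cf_neg_x_def R)
  next
    case e
    have mx: "max 1 (R - 1) = b" using b1 R e by simp
    have l: "cf_pos_x (Suc b) b R = fps_X ^ (tri (Suc b) + tri b + tri (Suc b))"
      by (simp add: cf_pos_x_def R e)
    have r1: "cf_neg_x b b b = fps_X ^ (tri b + tri b + tri b)"
      by (simp add: cf_neg_x_def)
    have r2: "cf_pos_y b b R = 0" by (simp add: cf_pos_y_def R e)
    show ?thesis unfolding l r1 r2 mx by (simp add: power_add[symmetric] algebra_simps)
  next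
    case m
    have mx: "max 1 (R - 1) = r" using m R by simp
    from m obtain k where b: "b = Suc (r + k)" using less_iff_Suc_add by auto
    have l: "cf_pos_x (Suc b) b R = fps_X ^ (tri (Suc b) + tri b + tri (Suc r))
        * qbin (Suc (b + r + k)) (Suc k)"
      by (simp add: cf_pos_x_def b R ac_simps)
    have r1: "cf_neg_x b b r = fps_X ^ (tri b + tri b + tri r) * qbin (b + r + k) (Suc k)"
      using m by (simp add: cf_neg_x_def b ac_simps)
    have r2: "cf_pos_y b b R = fps_X ^ (tri b + tri b + b + tri (Suc r)) * qbin (b + r + k) k"
      by (simp add: cf_pos_y_def b R ac_simps)
    show ?thesis unfolding l r1 r2 mx by (rule pascal_pow_split) (simp_all add: b)
  next
    case o
    then show ?thesis using cf_pos_x_balanced_step_1[OF b1] by (simp add: R)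
  qed
qed

lemma cf_neg_y_balanced_step_1:
  assumes "1 \<le> a"
  shows "cf_neg_y a (Suc a) 1 = fps_X ^ (2 * a) * (cf_neg_x a a 1 + cf_pos_y a a 1)"
proof -
  obtain k where a: "a = Suc k" using assms by (cases a) auto
  have l: "cf_neg_y a (Suc a) 1 = fps_X ^ (tri a + tri (Suc a) + a) * qbin (Suc (a + k)) (Suc k)"
    by (simp add: cf_neg_y_def a ac_simps)
  have r1: "cf_neg_x a a 1 = fps_X ^ (tri a + tri a) * qbin (a + k) k"
    by (simp add: cf_neg_x_def a ac_simps)
  have r2: "cf_pos_y a a 1 = fps_X ^ (tri a + tri a + a) * qbin (a + k) (Suc k)"
    using qbin_middle_symmetric[of k] by (simp add: cf_pos_y_def a ac_simps)
  show ?thesis unfolding l r1 r2 by (rule pascal_pow_factor) (simp_all add: a)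
qed

lemma cf_neg_y_balanced_step:
  assumes a1: "1 \<le> a" and R1: "1 \<le> R"
  shows "cf_neg_y a (Suc a) R = fps_X ^ (2 * a) * (cf_neg_x a a R + cf_pos_y a a (max 1 (R - 1)))"
proof -
  obtain r where R: "R = Suc r" using R1 by (cases R) auto
  consider (z) "a < r" | (e) "r = a" | (m) "1 \<le> r" "r < a" | (o) "r = 0"
    by linarith
  then show ?thesis
  proof cases
    case z
    then show ?thesis by (auto simp: cf_neg_y_def cf_pos_y_def cf_neg_x_def R)
  next
    case e
    have mx: "max 1 (R - 1) = a" using a1 R e by simp
    have l: "cf_neg_y a (Suc a) R = fps_X ^ (tri a + tri (Suc a) + a + tri (Suc a))"
      by (simp add: cf_neg_y_def R e)
    have r1: "cf_neg_x a a R = 0" by (simp add: cf_neg_x_def R e)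
    have r2: "cf_pos_y a a a = fps_X ^ (tri a + tri a + a + tri a)"
      by (simp add: cf_pos_y_def)
    show ?thesis unfolding l r1 r2 mx by (simp add: power_add[symmetric] algebra_simps)
  next
    case m
    have mx: "max 1 (R - 1) = r" using m R by simp
    from m obtain k where a: "a = Suc (r + k)" using less_iff_Suc_add by auto
    have l: "cf_neg_y a (Suc a) R = fps_X ^ (tri a + tri (Suc a) + a + tri (Suc r))
        * qbin (Suc (a + r + k)) (Suc k)"
      by (simp add: cf_neg_y_def a R ac_simps)
    have r1: "cf_neg_x a a R = fps_X ^ (tri a + tri a + tri (Suc r)) * qbin (a + r + k) k"
      by (simp add: cf_neg_x_def a R ac_simps)
    have r2: "cf_pos_y a a r = fps_X ^ (tri a + tri a + a + tri r) * qbin (a + r + k) (Suc k)"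
      using m by (simp add: cf_pos_y_def a ac_simps)
    show ?thesis unfolding l r1 r2 mx by (rule pascal_pow_factor) (simp_all add: a)
  next
    case o
    then show ?thesis using cf_neg_y_balanced_step_1[OF a1] by (simp add: R)
  qed
qed

definition class_gf_closed :: "nat \<Rightarrow> nat \<Rightarrow> bool \<Rightarrow> nat \<Rightarrow> bool \<Rightarrow> rat fps" where
  "class_gf_closed a b \<sigma> R l = (if \<sigma> then (if l then cf_pos_x a b R else cf_pos_y a b R)
     else (if l then cf_neg_x a b R else cf_neg_y a b R))"

lemma class_gf_closed_x_unbalanced:
  "a \<noteq> b \<Longrightarrow> 1 \<le> R \<Longrightarrow> class_gf_closed (Suc a) b \<sigma> R True
    = fps_X ^ (a + b) * class_gf_closed a b \<sigma> R True + class_gf_closed a b \<sigma> R False"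
  using cf_pos_x_step cf_neg_x_step by (simp add: class_gf_closed_def)

lemma class_gf_closed_y_unbalanced:
  "a \<noteq> b \<Longrightarrow> 1 \<le> R \<Longrightarrow> class_gf_closed a (Suc b) \<sigma> R False
    = fps_X ^ (a + b) * (class_gf_closed a b \<sigma> R True + class_gf_closed a b \<sigma> R False)"
  using cf_pos_y_step cf_neg_y_step by (simp add: class_gf_closed_def)

lemma class_gf_closed_x_balanced:
  assumes "1 \<le> R"
  shows "class_gf_closed (Suc b) b \<sigma> R True = (if \<sigma> then (if b = 0 then (if R \<le> 1 then 1 else 0)
    else fps_X ^ (2 * b) * class_gf_closed b b False (max 1 (R - 1)) True
      + class_gf_closed b b True R False) else 0)"
  using cf_pos_x_balanced_step[of b R] assms
  by (auto simp: class_gf_closed_def cf_pos_x_def cf_neg_x_def)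

lemma class_gf_closed_y_balanced:
  assumes "1 \<le> R"
  shows "class_gf_closed a (Suc a) \<sigma> R False = (if \<not> \<sigma> then (if a = 0 then (if R \<le> 1 then 1 else 0)
    else fps_X ^ (2 * a) * (class_gf_closed a a False R True
      + class_gf_closed a a True (max 1 (R - 1)) False)) else 0)"
  using cf_neg_y_balanced_step[of a R] assms
  by (auto simp: class_gf_closed_def cf_neg_y_def cf_pos_y_def)

lemma class_gf_closed_0_x: "1 \<le> R \<Longrightarrow> class_gf_closed 0 b \<sigma> R True = 0"
  by (simp add: class_gf_closed_def cf_pos_x_def cf_neg_x_def)

lemma class_gf_closed_0_y: "1 \<le> R \<Longrightarrow> class_gf_closed a 0 \<sigma> R False = 0"
  by (simp add: class_gf_closed_def cf_pos_y_def cf_neg_y_def)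

lemma class_gf_eq_closed: "1 \<le> R \<Longrightarrow> class_gf a b \<sigma> R l = class_gf_closed a b \<sigma> R l"
proof (induction "a + b" arbitrary: a b \<sigma> R l)
  case 0
  then show ?case by (simp add: class_gf_empty class_gf_closed_def cf_pos_x_def cf_pos_y_def
      cf_neg_x_def cf_neg_y_def)
next
  case (Suc n)
  have IH: "class_gf a' b' \<sigma>' R' l' = class_gf_closed a' b' \<sigma>' R' l'"
    if "a' + b' = n" "1 \<le> R'" for a' b' \<sigma>' R' l'
    using Suc.hyps(1) that by blast
  show ?case
  proof (cases l)
    case True
    show ?thesis
    proof (cases a)
      case (Suc a')
      then show ?thesis
        using Suc.hyps(2) Suc.prems True IH
          class_gf_x_unbalanced[of a' b] class_gf_x_balanced[of R b]
          class_gf_closed_x_unbalanced[of a' b R] class_gf_closed_x_balanced[of R b]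
        by (cases "a' = b") auto
    qed (use True Suc.prems class_gf_0_x class_gf_closed_0_x in simp)
  next
    case False
    show ?thesis
    proof (cases b)
      case (Suc b')
      then show ?thesis
        using Suc.hyps(2) Suc.prems False IH
          class_gf_y_unbalanced[of a b'] class_gf_y_balanced[of R a]
          class_gf_closed_y_unbalanced[of a b' R] class_gf_closed_y_balanced[of R a]
        by (cases "a = b'") auto
    qed (use False Suc.prems class_gf_0_y class_gf_closed_0_y in simp)
  qed
qed

section \<open>The generating functions\<close>

lemma one_minus_X_power_nonzero: "0 < j \<Longrightarrow> (1 - fps_X ^ j :: 'a::comm_ring_1 fps) \<noteq> 0"
proof
  assume "0 < j" and "(1 - fps_X ^ j :: 'a fps) = 0"
  then have "fps_nth (1 - fps_X ^ j :: 'a fps) 0 = 0" by simp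
  then show False using \<open>0 < j\<close> by simp
qed

lemma qbin_double_ratio:
  assumes "1 \<le> m" and "m \<le> d"
  shows "(1 - fps_X ^ (d + m)) * qbin (2 * d) (d + m)
    = (1 - fps_X ^ d * fps_X ^ d) * (qbin (d + d - 1) (d + m - 1) :: rat fps)"
proof -
  have "(1 - fps_X ^ Suc (d + m - 1)) * qbin (Suc (d + d - 1)) (Suc (d + m - 1))
      = (1 - fps_X ^ Suc (d + d - 1)) * (qbin (d + d - 1) (d + m - 1) :: rat fps)"
    using assms by (intro qbin_Suc_Suc_ratio) simp
  moreover have "Suc (d + m - 1) = d + m" "Suc (d + d - 1) = 2 * d" using assms by auto
  ultimately show ?thesis by (simp add: power_add[symmetric] mult_2)
qed

lemma qbin_top_ratio:
  assumes "1 \<le> m" and "m \<le> d"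
  shows "(1 - fps_X ^ (d + m)) * qbin (d + d - 1) (d + m)
    = (1 - fps_X ^ (d - m)) * (qbin (d + d - 1) (d + m - 1) :: rat fps)"
proof (cases "m = d")
  case False
  then obtain N where N: "d + d - 1 = Suc N" and k: "d + m - 1 \<le> N"
    using assms by (cases "d + d - 1") auto
  have "Suc (d + m - 1) = d + m" "Suc N - (d + m - 1) = d - m" using N assms by auto
  then show ?thesis
    using qbin_Suc_Suc_ratio[where 'a=rat, OF k] qbin_Suc_ratio[where 'a=rat, OF k] N by simp
qed (use assms in \<open>simp add: qbin_eq_0\<close>)

definition qbin_diff :: "nat \<Rightarrow> nat \<Rightarrow> rat fps" where
  "qbin_diff d m = qbin (d + d - 1) (d + m - 1) - fps_X ^ m * qbin (d + d - 1) (d + m)"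

lemma qbin_diff_identity:
  assumes "1 \<le> m" and "m \<le> d"
  shows "(1 - fps_X ^ d) * qbin_diff d m = (1 - fps_X ^ m) * qbin (2 * d) (d + m)"
proof -
  let ?B = "qbin (d + d - 1) (d + m - 1) :: rat fps" and ?B' = "qbin (d + d - 1) (d + m) :: rat fps"
  have xm: "(fps_X :: rat fps) ^ m * fps_X ^ (d - m) = fps_X ^ d"
    using assms by (simp flip: power_add)
  have "(1 - fps_X ^ (d + m)) * ((1 - fps_X ^ d) * qbin_diff d m)
      = (1 - fps_X ^ d) * ((1 - fps_X ^ (d + m)) * ?B - fps_X ^ m * ((1 - fps_X ^ (d + m)) * ?B'))"
    by (simp add: qbin_diff_def algebra_simps)
  also have "\<dots> = (1 - fps_X ^ m) * ((1 - fps_X ^ d * fps_X ^ d) * ?B)"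
    unfolding qbin_top_ratio[OF assms] by (simp add: algebra_simps power_add flip: xm)
  also have "\<dots> = (1 - fps_X ^ (d + m)) * ((1 - fps_X ^ m) * qbin (2 * d) (d + m))"
    unfolding qbin_double_ratio[OF assms, symmetric] by (simp add: algebra_simps)
  finally show ?thesis
    using one_minus_X_power_nonzero[of "d + m", where 'a=rat] assms by simp
qed

lemma word_blocks_frobenius:
  assumes "l \<in> diag_partitions n d" and "1 \<le> d"
  shows "word_blocks (merge_word (fst (frobenius d l)) (snd (frobenius d l)))
    = (num_blocks l, last_block_positive l)"
proof -
  have "frobenius d l \<in> frobenius_pairs n d" using frobenius_in_pairs[OF assms(1)] .
  then have p: "sorted_wrt (<) (fst (frobenius d l))" "sorted_wrt (<) (snd (frobenius d l))"
    "length (fst (frobenius d l)) = d" "length (snd (frobenius d l)) = d"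
    by (auto simp: frobenius_pairs_def)
  have signs: "col_signs l = pair_signs (fst (frobenius d l)) (snd (frobenius d l))"
    using assms(1)
    by (auto simp: diag_partitions_def frobenius_def pair_signs_def col_signs_def col_positive_def
      rev_map)
  have "col_signs l \<noteq> []" using assms by (auto simp: col_signs_def diag_partitions_def)
  then show ?thesis
    using word_blocks_merge_word[OF p(1,2)] p(3,4) signs sign_blocks_eq
    by (simp add: num_blocks_def last_block_positive_def)
qed

lemma card_filter_bij_betw:
  assumes "bij_betw f A B"
  shows "card {a \<in> A. Q (f a)} = card {b \<in> B. Q b}"
proof -
  have "bij_betw f {a \<in> A. Q (f a)} {b \<in> B. Q b}"
    using assms unfolding bij_betw_def inj_on_def by auto
  then show ?thesis by (rule bij_betw_same_card)
qed

lemma card_partitions_blocks: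
  assumes "1 \<le> d"
  shows "card {l \<in> partitions n. frob_d l = d \<and> num_blocks l = m \<and> last_block_positive l = \<sigma>}
    = card {p \<in> frobenius_pairs n d. word_blocks (merge_word (fst p) (snd p)) = (m, \<sigma>)}"
proof -
  have "{l \<in> partitions n. frob_d l = d \<and> num_blocks l = m \<and> last_block_positive l = \<sigma>}
      = {l \<in> diag_partitions n d.
          word_blocks (merge_word (fst (frobenius d l)) (snd (frobenius d l))) = (m, \<sigma>)}"
    using word_blocks_frobenius[OF _ assms] by (auto simp: diag_partitions_def)
  then show ?thesis using card_filter_bij_betw[OF bij_betw_frobenius[OF assms]] by simp
qed

definition balanced_words :: "nat \<Rightarrow> nat \<times> bool \<Rightarrow> bool list set" where
  "balanced_words d e = {r \<in> words (d + d). count_x r = d \<and> word_blocks r = e}"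

lemma frobenius_pairs_blocks_eq_UN:
  assumes "d \<le> n"
  shows "{p \<in> frobenius_pairs n d. word_blocks (merge_word (fst p) (snd p)) = e}
    = (\<Union>r\<in>balanced_words d e. {p \<in> word_pairs r. pair_weight p = n - d})"
proof (intro set_eqI iffI)
  fix p assume "p \<in> {p \<in> frobenius_pairs n d. word_blocks (merge_word (fst p) (snd p)) = e}"
  then show "p \<in> (\<Union>r\<in>balanced_words d e. {p \<in> word_pairs r. pair_weight p = n - d})"
    by (auto simp: frobenius_pairs_def balanced_words_def words_def word_pairs_def pair_weight_def)
next
  fix p assume "p \<in> (\<Union>r\<in>balanced_words d e. {p \<in> word_pairs r. pair_weight p = n - d})"
  then obtain r where r: "r \<in> balanced_words d e" "p \<in> word_pairs r" "pair_weight p = n - d"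
    by blast
  then have "merge_word (fst p) (snd p) = r" by (simp add: word_pairs_def)
  then have "length (fst p) = d" "length (snd p) = d"
    using r(1) count_x_add_count_y[of r] by (auto simp: balanced_words_def words_def)
  then show "p \<in> {p \<in> frobenius_pairs n d. word_blocks (merge_word (fst p) (snd p)) = e}"
    using r assms \<open>merge_word (fst p) (snd p) = r\<close>
    by (auto simp: frobenius_pairs_def word_pairs_def pair_weight_def balanced_words_def)
qed

lemma card_frobenius_pairs_blocks:
  "card {p \<in> frobenius_pairs n d. word_blocks (merge_word (fst p) (snd p)) = e}
    = (if d \<le> n then (\<Sum>r\<in>balanced_words d e. pair_count r (n - d)) else 0)"
proof (cases "d \<le> n")
  case True
  have "finite (balanced_words d e)" by (simp add: balanced_words_def finite_words)
  then have "card (\<Union>r\<in>balanced_words d e. {p \<in> word_pairs r. pair_weight p = n - d})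
      = (\<Sum>r\<in>balanced_words d e. card {p \<in> word_pairs r. pair_weight p = n - d})"
    using finite_word_pairs_weight by (intro card_UN_disjoint) (auto simp: word_pairs_def)
  then show ?thesis using True frobenius_pairs_blocks_eq_UN[OF True] by (simp add: pair_count_def)
qed (auto simp: frobenius_pairs_def)

lemma fps_card_frobenius_pairs_blocks:
  assumes "1 \<le> d"
  shows "Abs_fps (\<lambda>n. if n = 0 then 0
      else of_nat (card {p \<in> frobenius_pairs n d. word_blocks (merge_word (fst p) (snd p)) = e}))
    = fps_X ^ d * (\<Sum>r\<in>balanced_words d e. pair_gf r)"
proof (rule fps_ext)
  fix n
  show "fps_nth (Abs_fps (\<lambda>n. if n = 0 then 0
      else of_nat (card {p \<in> frobenius_pairs n d. word_blocks (merge_word (fst p) (snd p)) = e}))) n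
    = fps_nth (fps_X ^ d * (\<Sum>r\<in>balanced_words d e. pair_gf r)) n"
    unfolding fps_X_power_mult_nth fps_sum_nth card_frobenius_pairs_blocks
    using assms by (auto simp: pair_gf_def not_less)
qed

lemma pair_gf_eq: "pair_gf r = fps_X ^ min_weight r * inverse (qpoch fps_X (length r))"
proof -
  have "qpoch fps_X (length r) * inverse (qpoch fps_X (length r)) = (1 :: rat fps)"
    by (rule inverse_mult_eq_1') simp
  then show ?thesis using pair_gf_mult_qpoch[of r] by (metis mult.assoc mult.right_neutral)
qed

text \<open>The last sign of a balanced word is opposite to its first letter (\<open>word_blocks_balanced\<close>).\<close>
lemma sum_min_weight_balanced_words:
  assumes "1 \<le> d"
  shows "(\<Sum>r\<in>balanced_words d (m, \<sigma>). fps_X ^ min_weight r)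
    = class_gf d d \<sigma> m (\<not> \<sigma>) - class_gf d d \<sigma> (Suc m) (\<not> \<sigma>)"
proof -
  have "(if count_x r = d \<and> word_blocks r = (m, \<sigma>) then fps_X ^ min_weight r else 0)
      = class_term d \<sigma> m (\<not> \<sigma>) r - class_term d \<sigma> (Suc m) (\<not> \<sigma>) r" if "r \<in> words (d + d)" for r
  proof (cases "count_x r = d")
    case True
    have "r \<noteq> []" "count_x r = count_y r"
      using that True assms count_x_add_count_y[of r] by (auto simp: words_def)
    then have "snd (word_blocks r) \<longleftrightarrow> \<not> hd r" by (rule word_blocks_balanced)
    then show ?thesis using True \<open>r \<noteq> []\<close>
      by (cases "word_blocks r") (auto simp: class_term_def word_class_def)
  qed (simp add: class_term_def word_class_def)
  then have "(\<Sum>r\<in>words (d + d).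
      if count_x r = d \<and> word_blocks r = (m, \<sigma>) then fps_X ^ min_weight r else 0)
      = (\<Sum>r\<in>words (d + d). class_term d \<sigma> m (\<not> \<sigma>) r - class_term d \<sigma> (Suc m) (\<not> \<sigma>) r)"
    by (rule sum.cong[OF refl])
  then show ?thesis
    by (simp add: balanced_words_def class_gf_def sum.inter_filter[OF finite_words] sum_subtractf)
qed

lemma class_gf_blocks_closed:
  assumes "1 \<le> m" and "m \<le> d"
  shows "class_gf d d \<sigma> m (\<not> \<sigma>) - class_gf d d \<sigma> (Suc m) (\<not> \<sigma>)
    = fps_X ^ (tri d + tri d + (if \<sigma> then d else 0) + tri m) * qbin_diff d m"
proof -
  have "qbin (d + d - 1) (d - m) = (qbin (d + d - 1) (d + m - 1) :: rat fps)"
    using qbin_symmetric[of "d - m" "d + d - 1", where 'a=rat] assms by simp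
  moreover have "(if Suc m \<le> d then qbin (d + d - 1) (d - Suc m) else 0)
      = (qbin (d + d - 1) (d + m) :: rat fps)"
    using qbin_symmetric[of "d - Suc m" "d + d - 1", where 'a=rat] assms
      qbin_eq_0[where 'a=rat, of "d + d - 1" "d + m"]
    by auto
  ultimately show ?thesis
    using assms by (cases \<sigma>) (auto simp: class_gf_eq_closed class_gf_closed_def cf_pos_y_def
        cf_neg_x_def qbin_diff_def power_add algebra_simps split: if_splits)
qed

lemma qbin_diff_eq_ratio:
  assumes "1 \<le> m" and "m \<le> d"
  shows "((1 - fps_X ^ m) / (1 - fps_X ^ d)) * qbinom (2 * d) (d + m) = qbin_diff d m"
proof -
  have unit: "fps_nth (1 - fps_X ^ d :: rat fps) 0 \<noteq> 0" using assms by simp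
  have q: "qbinom (2 * d) (d + m) = (qbin (2 * d) (d + m) :: rat fps)"
    by (rule qbinom_eq_qbin) (use assms in simp)
  have "((1 - fps_X ^ m) / (1 - fps_X ^ d)) * qbinom (2 * d) (d + m)
      = inverse (1 - fps_X ^ d) * ((1 - fps_X ^ m) * (qbin (2 * d) (d + m) :: rat fps))"
    unfolding fps_divide_unit[OF unit] q by (simp only: mult_ac)
  also have "\<dots> = inverse (1 - fps_X ^ d) * ((1 - fps_X ^ d) * qbin_diff d m)"
    by (simp only: qbin_diff_identity[OF assms])
  also have "\<dots> = qbin_diff d m"
    using inverse_mult_eq_1[OF unit] by (simp flip: mult.assoc)
  finally show ?thesis .
qed

lemma gf_partitions_blocks:
  assumes "1 \<le> m" and "m \<le> d"
  shows "Abs_fps (\<lambda>n. if n = 0 then 0 else of_nat (card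
      {l \<in> partitions n. frob_d l = d \<and> num_blocks l = m \<and> last_block_positive l = \<sigma>}))
    = (fps_X ^ (d^2 + (if \<sigma> then d else 0) + (m choose 2)) / qpoch fps_X (2 * d)) *
      ((1 - fps_X ^ m) / (1 - fps_X ^ d)) * (qbinom (2 * d) (d + m) :: rat fps)"
    (is "?gf = _")
proof -
  have d: "1 \<le> d" using assms by simp
  let ?e = "tri d + tri d + (if \<sigma> then d else 0) + tri m"
  have "length r = 2 * d" if "r \<in> balanced_words d (m, \<sigma>)" for r
    using that by (simp add: balanced_words_def words_def)
  then have "?gf = fps_X ^ d * ((\<Sum>r\<in>balanced_words d (m, \<sigma>). fps_X ^ min_weight r)
      * inverse (qpoch fps_X (2 * d)))"
    unfolding card_partitions_blocks[OF d] fps_card_frobenius_pairs_blocks[OF d]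
    by (simp add: pair_gf_eq sum_distrib_right)
  also have "\<dots> = fps_X ^ (d + ?e) * inverse (qpoch fps_X (2 * d)) * qbin_diff d m"
    unfolding sum_min_weight_balanced_words[OF d] class_gf_blocks_closed[OF assms]
    by (simp add: power_add mult_ac)
  also have "d + ?e = d^2 + (if \<sigma> then d else 0) + (m choose 2)"
    using tri_eq[of d] by (simp add: tri_eq_choose_two power2_eq_square)
  finally show ?thesis
    unfolding mult.assoc[of "_ / _"] qbin_diff_eq_ratio[OF assms] by (simp add: fps_divide_unit)
qed

theorem theorem1p1:
  fixes d m :: nat
  assumes "1 \<le> m" and "m \<le> d"
  shows "Abs_fps (\<lambda>n. if n = 0 then 0 else of_nat (a_plus m n d)) =
           (fps_X ^ (d^2 + d + (m choose 2)) / qpoch fps_X (2*d)) *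
           ((1 - fps_X ^ m) / (1 - fps_X ^ d)) * (qbinom (2*d) (d+m) :: rat fps) \<and>
         Abs_fps (\<lambda>n. if n = 0 then 0 else of_nat (a_minus m n d)) =
           (fps_X ^ (d^2 + (m choose 2)) / qpoch fps_X (2*d)) *
           ((1 - fps_X ^ m) / (1 - fps_X ^ d)) * (qbinom (2*d) (d+m) :: rat fps)"
proof -
  have plus: "a_plus m n d = card
      {l \<in> partitions n. frob_d l = d \<and> num_blocks l = m \<and> last_block_positive l = True}"
    and minus: "a_minus m n d = card
      {l \<in> partitions n. frob_d l = d \<and> num_blocks l = m \<and> last_block_positive l = False}" for n
    by (simp_all add: a_plus_def a_minus_def)
  show ?thesis
    unfolding plus minus
    using gf_partitions_blocks[OF assms, of True] gf_partitions_blocks[OF assms, of False]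
    by (simp only: if_True if_False add_0_right)
qed

end
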